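(* Let $f:\mathbb{R}^n\to\mathbb{R}$ be twice differentiable with $\mu I\preceq \nabla^2 f(x)\preceq L I$ for all $x$ (where $0<\mu\le L$), and strongly self-concordant with constant $M\ge 0$. Let $\kappa=L/\mu$. Run the SR1 method with correction strategy: choose $x_0\in\mathbb{R}^n$, set $G_0=L\cdot I$, $r_{-1}=0$, and for $k=0,1,2,\dots$ set $x_{k+1}=x_k-G_k^{-1}\nabla f(x_k)$, $u_k=x_{k+1}-x_k$, $r_k=\|u_k\|_{x_k}$, $\widetilde G_k=\left(1+\frac{Mr_{k-1}}{2}\right)\left(1+\frac{Mr_k}{2}\right)G_k$, $J_k=\int_0^1\nabla^2 f(x_k+tu_k)\,dt$, and $G_{k+1}=\mathrm{SR1}(J_k,\widetilde G_k,u_k)$. Suppose the initial point satisfies $M\lambda_f(x_0)\le \frac{\ln(3/2)}{4\kappa}$. Then for all $k\ge 1$, $$\lambda_f(x_k)\le\left(e^{\frac{2n\ln(e\kappa)}{k}}-1\right)^{k/2}\sqrt{3\kappa}\cdot\lambda_f(x_0).$$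
   Context: $f$ is strongly self-concordant with constant $M\ge0$ if $\nabla^2 f(y)-\nabla^2 f(x)\preceq M\|y-x\|_z\nabla^2 f(w)$ for all $x,y,z,w\in\mathbb{R}^n$, where $\|u\|_x=\sqrt{u^\top\nabla^2 f(x)u}$ is the local norm. $\lambda_f(x)=\langle\nabla f(x),[\nabla^2 f(x)]^{-1}\nabla f(x)\rangle^{1/2}$. $\preceq$ is the Loewner order. For symmetric positive definite $A,G$ and $u\neq 0$, the SR1 update is $\mathrm{SR1}(A,G,u)=G$ if $(G-A)u=0$, and otherwise $\mathrm{SR1}(A,G,u)=G-\frac{(G-A)uu^\top(G-A)}{u^\top(G-A)u}$. *)

theory Defs
  imports "HOL-Analysis.Analysis"
begin

definition loewner_le :: "real^'n^'n \<Rightarrow> real^'n^'n \<Rightarrow> bool" where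
  "loewner_le A B \<longleftrightarrow> (\<forall>v::real^'n. v \<bullet> (A *v v) \<le> v \<bullet> (B *v v))"

definition outer :: "real^'n \<Rightarrow> real^'n \<Rightarrow> real^'n^'n" where
  "outer u v = (\<chi> i j. u $ i * v $ j)"

definition local_norm :: "(real^'n \<Rightarrow> real^'n^'n) \<Rightarrow> real^'n \<Rightarrow> real^'n \<Rightarrow> real" where
  "local_norm H x u = sqrt (u \<bullet> (H x *v u))"

definition newton_decr :: "(real^'n \<Rightarrow> real^'n) \<Rightarrow> (real^'n \<Rightarrow> real^'n^'n) \<Rightarrow> real^'n \<Rightarrow> real" where
  "newton_decr g H x = sqrt (g x \<bullet> (matrix_inv (H x) *v g x))"

definition strongly_self_concordant :: "(real^'n \<Rightarrow> real^'n^'n) \<Rightarrow> real \<Rightarrow> bool" where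
  "strongly_self_concordant H M \<longleftrightarrow> M \<ge> 0 \<and>
     (\<forall>x y z w. loewner_le (H y - H x) ((M * local_norm H z (y - x)) *\<^sub>R H w))"

definition SR1 :: "real^'n^'n \<Rightarrow> real^'n^'n \<Rightarrow> real^'n \<Rightarrow> real^'n^'n" where
  "SR1 A G u = (if (G - A) *v u = 0 then G
     else G - (1 / (u \<bullet> ((G - A) *v u))) *\<^sub>R ((G - A) ** outer u u ** (G - A)))"

end

theory Submission
  imports Defs
begin

text \<open>
  Write \<open>\<lambda>\<^sub>k\<close> for the Newton decrement at \<open>x\<^sub>k\<close>, \<open>\<kappa> = L / \<mu>\<close> and \<open>\<rho>\<^sub>k = M r\<^sub>k / 2\<close>.
  Strong self-concordance makes the Hessians at \<open>x\<^sub>k\<close>, \<open>x\<^sub>k\<^sub>+\<^sub>1\<close> and their mean \<open>J\<^sub>k\<close> along the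
  step agree up to factors \<open>1 + \<rho>\<^sub>k\<close>. The correction factors \<open>c\<^sub>k = (1 + \<rho>\<^sub>k\<^sub>-\<^sub>1)(1 + \<rho>\<^sub>k)\<close> are
  chosen so that \<open>G\<^sub>k\<close> stays an upper approximation,
  \<open>\<nabla>\<^sup>2f(x\<^sub>k) \<preceq> (1 + \<rho>\<^sub>k\<^sub>-\<^sub>1) G\<^sub>k \<preceq> (1 + \<rho>\<^sub>k\<^sub>-\<^sub>1) L P\<^sub>k I\<close> with \<open>P\<^sub>k = c\<^sub>0 \<cdots> c\<^sub>k\<^sub>-\<^sub>1\<close>.
  Under the initial condition an induction gives the linear rate \<open>\<lambda>\<^sub>k\<^sub>+\<^sub>1 \<le> (1 - 1/(2\<kappa>)) \<lambda>\<^sub>k\<close>,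
  hence \<open>\<Sum> \<rho>\<^sub>k \<le> 9/64\<close> and \<open>P\<^sub>k \<le> 32/23\<close> throughout.

  For the superlinear rate let \<open>\<tau>\<^sub>k = \<langle>\<nabla>f(x\<^sub>k), G\<^sub>k\<^sup>-\<^sup>1 \<nabla>f(x\<^sub>k)\<rangle>\<close>. Each SR1 update comes with a number
  \<open>\<theta>\<^sub>k \<ge> 0\<close> such that \<open>\<tau>\<^sub>k\<^sub>+\<^sub>1 \<le> c\<^sub>k \<tau>\<^sub>k (\<theta>\<^sub>k + 1 - 1/c\<^sub>k)\<^sup>2\<close> and
  \<open>det G\<^sub>k\<^sub>+\<^sub>1 (1 + \<theta>\<^sub>k\<^sup>2) = c\<^sub>k\<^sup>n det G\<^sub>k\<close>. Since \<open>G\<^sub>k \<succeq> \<mu>/(1 + \<rho>\<^sub>k\<^sub>-\<^sub>1) I\<close> bounds \<open>det G\<^sub>k\<close> from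
  below, the product of the \<open>1 + (\<theta>\<^sub>i + 1 - 1/c\<^sub>i)\<^sup>2\<close> is at most \<open>(e\<kappa>)\<^sup>2\<^sup>n\<close>, and the AM-GM
  inequality turns this into the bound \<open>(exp (2n ln(e\<kappa>)/k) - 1)\<^sup>k\<close> on the product of the
  \<open>(\<theta>\<^sub>i + 1 - 1/c\<^sub>i)\<^sup>2\<close>, which controls \<open>\<lambda>\<^sub>k\<^sup>2 \<le> 3\<kappa> \<lambda>\<^sub>0\<^sup>2 \<Prod> (\<theta>\<^sub>i + 1 - 1/c\<^sub>i)\<^sup>2\<close>.
\<close>

section \<open>Quadratic forms and positive definite matrices\<close>

definition quad_form :: "real^'n^'n \<Rightarrow> real^'n \<Rightarrow> real" where
  "quad_form A v = v \<bullet> (A *v v)"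

definition symmetric_matrix :: "real^'n^'n \<Rightarrow> bool" where
  "symmetric_matrix A \<longleftrightarrow> (\<forall>i j. A$i$j = A$j$i)"

definition pos_def_ge :: "real \<Rightarrow> real^'n^'n \<Rightarrow> bool" where
  "pos_def_ge m A \<longleftrightarrow> symmetric_matrix A \<and> 0 < m \<and> (\<forall>v. m * (v \<bullet> v) \<le> quad_form A v)"

definition dual_form :: "real^'n^'n \<Rightarrow> real^'n \<Rightarrow> real" where
  "dual_form A z = z \<bullet> (matrix_inv A *v z)"

lemma loewner_le_iff_quad_form: "loewner_le A B \<longleftrightarrow> (\<forall>v. quad_form A v \<le> quad_form B v)"
  by (simp add: loewner_le_def quad_form_def)

lemma quad_form_matrix_inv: "quad_form (matrix_inv A) v = dual_form A v"
  by (simp add: quad_form_def dual_form_def)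

lemma symmetric_matrix_inner_swap: "symmetric_matrix A \<Longrightarrow> x \<bullet> (A *v y) = y \<bullet> (A *v x)"
  unfolding symmetric_matrix_def inner_vec_def matrix_vector_mult_def
  apply (simp add: sum_distrib_left)
  apply (subst sum.swap)
  apply (auto intro!: sum.cong simp: mult_ac)
  done

lemma symmetric_matrixI:
  assumes "\<And>x y. x \<bullet> (A *v y) = y \<bullet> (A *v x)"
  shows "symmetric_matrix A"
proof -
  have entry: "axis i 1 \<bullet> (A *v axis j 1) = A$i$j" for i j
    by (simp add: matrix_vector_mult_basis inner_axis' column_def)
  show ?thesis
    unfolding symmetric_matrix_def using assms[of "axis _ 1" "axis _ 1"] by (simp add: entry)
qed

lemma symmetric_matrix_diff [simp]:
    "symmetric_matrix A \<Longrightarrow> symmetric_matrix B \<Longrightarrow> symmetric_matrix (A - B)"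
  and symmetric_matrix_scaleR [simp]: "symmetric_matrix A \<Longrightarrow> symmetric_matrix (c *\<^sub>R A)"
  and symmetric_matrix_mat [simp]: "symmetric_matrix (mat 1)"
  by (auto simp: symmetric_matrix_def mat_def)

lemma quad_form_diff [simp]: "quad_form (A - B) v = quad_form A v - quad_form B v"
  and quad_form_scaleR [simp]: "quad_form (c *\<^sub>R A) v = c * quad_form A v"
  and quad_form_mat [simp]: "quad_form (mat 1) v = v \<bullet> v"
  by (auto simp: quad_form_def matrix_vector_mult_diff_rdistrib inner_diff_right
      scaleR_matrix_vector_assoc[symmetric])

lemma quad_form_scaleR_vec [simp]: "quad_form A (c *\<^sub>R x) = c^2 * quad_form A x"
  unfolding quad_form_def by (simp add: matrix_vector_mult_scaleR power2_eq_square)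

lemma quad_form_uminus_vec [simp]: "quad_form A (- x) = quad_form A x"
  unfolding quad_form_def by (simp add: vec.neg)

lemma quad_form_add_vec:
  "symmetric_matrix A \<Longrightarrow> quad_form A (x + y) = quad_form A x + 2 * (x \<bullet> (A *v y)) + quad_form A y"
  unfolding quad_form_def
  by (simp add: matrix_vector_right_distrib inner_add_left inner_add_right
      symmetric_matrix_inner_swap[of A y x])

lemma quad_form_diff_vec:
  "symmetric_matrix A \<Longrightarrow> quad_form A (x - y) = quad_form A x - 2 * (x \<bullet> (A *v y)) + quad_form A y"
  unfolding quad_form_def
  by (simp add: matrix_vector_mult_diff_distrib inner_diff_left inner_diff_right
      symmetric_matrix_inner_swap[of A y x])

lemma psd_Cauchy_Schwarz:
  assumes sym: "symmetric_matrix A" and psd: "\<And>v. 0 \<le> quad_form A v"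
  shows "(x \<bullet> (A *v y))^2 \<le> quad_form A x * quad_form A y"
proof -
  let ?b = "x \<bullet> (A *v y)"
  have quadratic: "0 \<le> quad_form A x + 2 * t * ?b + t^2 * quad_form A y" for t
    using psd[of "x + t *\<^sub>R y"] quad_form_add_vec[OF sym, of x "t *\<^sub>R y"]
    by (simp add: matrix_vector_mult_scaleR)
  show ?thesis
  proof (cases "quad_form A y = 0")
    case True
    have "?b = 0"
    proof (rule ccontr)
      assume nz: "?b \<noteq> 0"
      have "0 \<le> quad_form A x + 2 * (- (quad_form A x + 1) / (2 * ?b)) * ?b"
        using quadratic[of "- (quad_form A x + 1) / (2 * ?b)"] True by simp
      also have "\<dots> = -1" using nz by (simp add: field_simps)
      finally show False by simp
    qed
    then show ?thesis using True by simp
  next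
    case False
    then have pos: "quad_form A y > 0" using psd[of y] by simp
    have "0 \<le> quad_form A x + 2 * (- ?b / quad_form A y) * ?b + (- ?b / quad_form A y)^2 * quad_form A y"
      by (rule quadratic)
    also have "\<dots> = quad_form A x - ?b^2 / quad_form A y"
      using pos by (simp add: field_simps power2_eq_square)
    finally have "?b^2 / quad_form A y \<le> quad_form A x" by simp
    then show ?thesis using pos by (simp add: field_simps)
  qed
qed

lemma psd_Cauchy_Schwarz_abs:
  assumes "symmetric_matrix A" and "\<And>v. 0 \<le> quad_form A v"
  shows "\<bar>x \<bullet> (A *v y)\<bar> \<le> sqrt (quad_form A x) * sqrt (quad_form A y)"
  using real_sqrt_le_mono[OF psd_Cauchy_Schwarz[OF assms, of x y]] by (simp add: real_sqrt_mult)

lemma psd_sqrt_triangle: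
  assumes sym: "symmetric_matrix A" and psd: "\<And>v. 0 \<le> quad_form A v"
  shows "sqrt (quad_form A (x + y)) \<le> sqrt (quad_form A x) + sqrt (quad_form A y)"
proof (rule real_le_lsqrt)
  show "quad_form A (x + y) \<le> (sqrt (quad_form A x) + sqrt (quad_form A y))^2"
    using quad_form_add_vec[OF sym, of x y] psd_Cauchy_Schwarz_abs[OF sym psd, of x y] psd[of x] psd[of y]
    by (simp add: power2_eq_square algebra_simps)
qed (use psd in auto)

lemma pos_def_ge_quad_nonneg: "pos_def_ge m A \<Longrightarrow> 0 \<le> quad_form A v"
  unfolding pos_def_ge_def by (meson mult_nonneg_nonneg inner_ge_zero less_imp_le order_trans)

lemma pos_def_ge_quad_pos:
  assumes "pos_def_ge m A" "v \<noteq> 0" shows "0 < quad_form A v"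
  using assms unfolding pos_def_ge_def by (metis inner_gt_zero_iff mult_pos_pos order_less_le_trans)

lemma pos_def_ge_invertible:
  assumes "pos_def_ge m A" shows "invertible A"
proof -
  have "inj ((*v) A)"
    unfolding vec.inj_iff_eq_0 using pos_def_ge_quad_pos[OF assms] by (force simp: quad_form_def)
  then show ?thesis
    using matrix_left_invertible_injective invertible_left_inverse by blast
qed

lemma pos_def_ge_scaleR: "pos_def_ge m A \<Longrightarrow> 0 < c \<Longrightarrow> pos_def_ge (c * m) (c *\<^sub>R A)"
  unfolding pos_def_ge_def by (auto simp: mult.assoc)

lemma pos_def_ge_of_le:
  assumes "pos_def_ge m A" "symmetric_matrix B" "\<And>v. quad_form A v \<le> c * quad_form B v" "c > 0"
  shows "pos_def_ge (m / c) B"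
  using assms order_trans unfolding pos_def_ge_def by (fastforce simp: field_simps)

lemma matrix_inv_mult:
  assumes "invertible A"
  shows "A ** matrix_inv A = mat 1" "matrix_inv A ** A = mat 1"
proof -
  have "\<exists>A'. A ** A' = mat 1 \<and> A' ** A = mat 1" using assms unfolding invertible_def by auto
  then have "A ** matrix_inv A = mat 1 \<and> matrix_inv A ** A = mat 1"
    unfolding matrix_inv_def by (rule someI_ex)
  then show "A ** matrix_inv A = mat 1" "matrix_inv A ** A = mat 1" by auto
qed

lemma matrix_inv_mult_vec [simp]:
  assumes "invertible A"
  shows "A *v (matrix_inv A *v z) = z" "matrix_inv A *v (A *v z) = z"
  using matrix_inv_mult[OF assms] by (simp_all add: matrix_vector_mul_assoc)

lemma matrix_inv_unique:
  assumes "invertible A" "A ** B = mat 1"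
  shows "matrix_inv A = B"
  by (metis assms matrix_inv_mult(2) matrix_mul_assoc matrix_mul_lid matrix_mul_rid)

lemma symmetric_matrix_inv:
  assumes sym: "symmetric_matrix A" and inv: "invertible A"
  shows "symmetric_matrix (matrix_inv A)"
proof (rule symmetric_matrixI)
  fix x y
  let ?B = "matrix_inv A"
  have "x \<bullet> (?B *v y) = (A *v (?B *v x)) \<bullet> (?B *v y)" using inv by simp
  also have "\<dots> = (?B *v x) \<bullet> (A *v (?B *v y))"
    using symmetric_matrix_inner_swap[OF sym] by (simp add: inner_commute)
  also have "\<dots> = y \<bullet> (?B *v x)" using inv by (simp add: inner_commute)
  finally show "x \<bullet> (?B *v y) = y \<bullet> (?B *v x)" .
qed

lemma dual_form_eq_quad_form:
  assumes "pos_def_ge m A" shows "dual_form A z = quad_form A (matrix_inv A *v z)"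
  using pos_def_ge_invertible[OF assms] by (simp add: dual_form_def quad_form_def inner_commute)

lemma dual_form_mult_vec:
  assumes "pos_def_ge m A" shows "dual_form A (A *v p) = quad_form A p"
  using pos_def_ge_invertible[OF assms] by (simp add: dual_form_def quad_form_def inner_commute)

lemma dual_form_nonneg: "pos_def_ge m A \<Longrightarrow> 0 \<le> dual_form A z"
  using dual_form_eq_quad_form pos_def_ge_quad_nonneg by metis

lemma dual_form_scaleR_vec [simp]: "dual_form A (c *\<^sub>R z) = c^2 * dual_form A z"
  unfolding dual_form_def by (simp add: matrix_vector_mult_scaleR power2_eq_square)

lemma dual_form_uminus_vec [simp]: "dual_form A (- z) = dual_form A z"
  unfolding dual_form_def by (simp add: vec.neg)

lemma dual_Cauchy_Schwarz:
  assumes A: "pos_def_ge m A"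
  shows "z \<bullet> p \<le> sqrt (dual_form A z) * sqrt (quad_form A p)"
proof -
  have inv: "invertible A" by (rule pos_def_ge_invertible[OF A])
  have sym: "symmetric_matrix A" using A by (simp add: pos_def_ge_def)
  let ?q = "matrix_inv A *v z"
  have "z \<bullet> p = p \<bullet> (A *v ?q)" using inv by (simp add: inner_commute)
  also have "\<dots> \<le> sqrt (quad_form A p) * sqrt (quad_form A ?q)"
    using psd_Cauchy_Schwarz_abs[OF sym pos_def_ge_quad_nonneg[OF A], of p ?q] by linarith
  finally show ?thesis by (simp add: dual_form_eq_quad_form[OF A] mult.commute)
qed

lemma dual_form_sqrt_triangle:
  assumes A: "pos_def_ge m A"
  shows "sqrt (dual_form A (z + w)) \<le> sqrt (dual_form A z) + sqrt (dual_form A w)"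
  using psd_sqrt_triangle[of A "matrix_inv A *v z" "matrix_inv A *v w"] A pos_def_ge_quad_nonneg[OF A]
  by (simp add: pos_def_ge_def dual_form_eq_quad_form[OF A] matrix_vector_right_distrib)

lemma sqrt_le_of_le_mult_sqrt:
  assumes "0 \<le> X" "0 \<le> c" "X \<le> c * sqrt X" shows "sqrt X \<le> c"
proof (cases "X = 0")
  case False
  then have "sqrt X > 0" using assms by simp
  moreover have "sqrt X * sqrt X \<le> c * sqrt X" using assms by simp
  ultimately show ?thesis by (meson mult_right_le_imp_le)
qed (use assms in simp)

lemma dual_form_antimono:
  assumes A: "pos_def_ge m A" and B: "pos_def_ge m' B"
    and le: "\<And>v. quad_form A v \<le> quad_form B v"
  shows "dual_form B z \<le> dual_form A z"
proof -
  let ?p = "matrix_inv B *v z"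
  have "dual_form B z = z \<bullet> ?p" by (simp add: dual_form_def)
  also have "\<dots> \<le> sqrt (dual_form A z) * sqrt (quad_form A ?p)" by (rule dual_Cauchy_Schwarz[OF A])
  also have "\<dots> \<le> sqrt (dual_form A z) * sqrt (quad_form B ?p)"
    by (intro mult_left_mono real_sqrt_le_mono le) (simp add: dual_form_nonneg[OF A])
  finally have "dual_form B z \<le> sqrt (dual_form A z) * sqrt (dual_form B z)"
    by (simp add: dual_form_eq_quad_form[OF B])
  then have "sqrt (dual_form B z) \<le> sqrt (dual_form A z)"
    by (intro sqrt_le_of_le_mult_sqrt) (simp_all add: dual_form_nonneg[OF A] dual_form_nonneg[OF B])
  then show ?thesis by simp
qed

lemma dual_form_scaleR_matrix:
  assumes A: "pos_def_ge m A" and c: "0 < c"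
  shows "dual_form (c *\<^sub>R A) z = dual_form A z / c"
proof -
  have inv: "invertible A" by (rule pos_def_ge_invertible[OF A])
  have "(c *\<^sub>R A) ** ((1/c) *\<^sub>R matrix_inv A) = mat 1"
    using c matrix_inv_mult(1)[OF inv] by (simp add: matrix_scalar_ac scalar_matrix_assoc[symmetric])
  moreover have "invertible (c *\<^sub>R A)" using scalar_invertible[OF _ inv, of c] c by simp
  ultimately have "matrix_inv (c *\<^sub>R A) = (1/c) *\<^sub>R matrix_inv A"
    using matrix_inv_unique by blast
  then show ?thesis unfolding dual_form_def by (simp add: scaleR_matrix_vector_assoc[symmetric])
qed

lemma dual_form_le_scaled:
  assumes A: "pos_def_ge m A" and B: "pos_def_ge m' B" and c: "c > 0"
    and le: "\<And>v. quad_form A v \<le> c * quad_form B v"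
  shows "dual_form B z \<le> c * dual_form A z"
proof -
  have "dual_form (c *\<^sub>R B) z \<le> dual_form A z"
    by (rule dual_form_antimono[OF A pos_def_ge_scaleR[OF B c]]) (simp add: le)
  then show ?thesis using c by (simp add: dual_form_scaleR_matrix[OF B c] field_simps)
qed

lemma symmetric_bilinear_bound:
  assumes sQ: "symmetric_matrix Q" and Q: "\<And>v. v \<noteq> 0 \<Longrightarrow> 0 < quad_form Q v"
    and D: "symmetric_matrix D" and bound: "\<And>v. \<bar>quad_form D v\<bar> \<le> \<gamma> * quad_form Q v"
  shows "\<bar>x \<bullet> (D *v y)\<bar> \<le> \<gamma> * (sqrt (quad_form Q x) * sqrt (quad_form Q y))"
proof -
  have Q0: "0 \<le> quad_form Q v" for v
    using Q[of v] by (cases "v = 0") (auto simp: quad_form_def)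
  have polar: "2 * \<bar>a \<bullet> (D *v b)\<bar> \<le> \<gamma> * (quad_form Q a + quad_form Q b)" for a b
  proof -
    have "4 * \<bar>a \<bullet> (D *v b)\<bar> = \<bar>quad_form D (a + b) - quad_form D (a - b)\<bar>"
      using quad_form_add_vec[OF D, of a b] quad_form_diff_vec[OF D, of a b] by simp
    also have "\<dots> \<le> \<gamma> * (quad_form Q (a + b) + quad_form Q (a - b))"
      using bound[of "a + b"] bound[of "a - b"] by (simp add: distrib_left)
    also have "\<dots> = 2 * (\<gamma> * (quad_form Q a + quad_form Q b))"
      using quad_form_add_vec[OF sQ, of a b] quad_form_diff_vec[OF sQ, of a b] by (simp add: algebra_simps)
    finally show ?thesis by simp
  qed
  show ?thesis
  proof (cases "x = 0 \<or> y = 0")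
    case True then show ?thesis by (auto simp: quad_form_def)
  next
    case False
    define qx qy where "qx = sqrt (quad_form Q x)" and "qy = sqrt (quad_form Q y)"
    have qx: "qx > 0" and qy: "qy > 0"
      using False Q by (auto simp: qx_def qy_def)
    \<comment> \<open>rescale so that both terms on the right of \<open>polar\<close> coincide\<close>
    define t where "t = sqrt (qy / qx)"
    have t: "t > 0" "t^2 = qy / qx" using qx qy by (auto simp: t_def)
    have "2 * \<bar>x \<bullet> (D *v y)\<bar> = 2 * \<bar>(t *\<^sub>R x) \<bullet> (D *v ((1/t) *\<^sub>R y))\<bar>"
      using t by (simp add: matrix_vector_mult_scaleR)
    also have "\<dots> \<le> \<gamma> * (t^2 * qx^2 + qy^2 / t^2)"
      using polar[of "t *\<^sub>R x" "(1/t) *\<^sub>R y"] Q0 by (simp add: qx_def qy_def power_divide)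
    also have "t^2 * qx^2 + qy^2 / t^2 = 2 * (qx * qy)"
      unfolding t(2) using qx qy by (simp add: power2_eq_square field_simps)
    finally show ?thesis by (simp add: qx_def qy_def)
  qed
qed

section \<open>Rank-one updates and determinants\<close>

lemma matrix_add_rdistrib: "(A + B) ** C = A ** C + B ** (C::real^'n^'n)"
  by (simp add: matrix_matrix_mult_def vec_eq_iff distrib_right sum.distrib)

lemma matrix_diff_ldistrib: "C ** (A - B) = C ** A - C ** (B::real^'n^'n)"
  by (simp add: matrix_matrix_mult_def vec_eq_iff right_diff_distrib sum_subtractf)

lemma transpose_diff: "transpose (A - B) = transpose A - transpose (B::real^'n^'n)"
  by (simp add: transpose_def vec_eq_iff)

lemma transpose_symmetric_matrix: "symmetric_matrix A \<Longrightarrow> transpose A = A"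
  by (simp add: symmetric_matrix_def transpose_def vec_eq_iff)

lemma outer_mult_vec: "outer a b *v v = (b \<bullet> v) *\<^sub>R a"
  by (simp add: outer_def matrix_vector_mult_def vec_eq_iff inner_vec_def sum_distrib_left mult_ac)

lemma matrix_mult_outer: "A ** outer a b = outer (A *v a) b"
  apply (simp add: outer_def matrix_matrix_mult_def matrix_vector_mult_def vec_eq_iff sum_distrib_right)
  apply (auto intro!: sum.cong)
  done

lemma outer_mult_matrix: "outer a b ** A = outer a (transpose A *v b)"
  apply (simp add: outer_def matrix_matrix_mult_def matrix_vector_mult_def vec_eq_iff sum_distrib_left
      transpose_def)
  apply (auto intro!: sum.cong)
  done

lemma outer_uminus: "outer (- a) b = - outer a b"
  and outer_scaleR: "outer (c *\<^sub>R a) b = c *\<^sub>R outer a b"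
  and outer_zero_right: "outer a 0 = 0"
  and transpose_outer: "transpose (outer a b) = outer b a"
  by (simp_all add: outer_def transpose_def vec_eq_iff mult_ac)

lemma symmetric_matrix_outer: "symmetric_matrix (outer w w)"
  by (simp add: symmetric_matrix_def outer_def mult.commute)

lemma quad_form_outer_self: "quad_form (outer a a) v = (a \<bullet> v)^2"
  by (simp add: quad_form_def outer_mult_vec power2_eq_square inner_commute)

lemma quad_form_axis: "quad_form A (axis j 1) = A $ j $ j"
  by (simp add: quad_form_def matrix_vector_mult_basis inner_axis' column_def)

lemma quad_form_congruence: "quad_form (E ** A ** transpose E) v = quad_form A (transpose E *v v)"
  unfolding quad_form_def
  by (simp add: matrix_vector_mul_assoc[symmetric] dot_lmul_matrix[symmetric])

lemma det_scaleR: "det (c *\<^sub>R A) = c ^ CARD('n) * det (A::real^'n^'n)"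
proof -
  have "c *\<^sub>R A = (\<chi> i. (\<lambda>_. c) i *s (\<lambda>i. A $ i) i)"
    by (simp add: vec_eq_iff)
  then show ?thesis using det_rows_mul[of "\<lambda>_. c" "\<lambda>i. A $ i"] by simp
qed

lemma det_replace_row_axis:
  fixes y :: "real^'n"
  shows "det (\<chi> i. if i = j then y else axis i 1) = y $ j"
proof -
  let ?A = "(\<chi> i. if i = j then y else axis i 1) :: real^'n^'n"
  let ?x = "- (\<Sum>i\<in>UNIV - {j}. y$i *s axis i (1::real))"
  have rows: "\<And>i. row i ?A = (if i = j then y else axis i 1)" by (simp add: row_def)
  have span: "?x \<in> vec.span {row i ?A |i. i \<noteq> j}"
  proof -
    have "(\<Sum>i\<in>UNIV - {j}. y$i *s axis i (1::real)) \<in> vec.span {row i ?A |i. i \<noteq> j}"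
    proof (rule vec.span_sum)
      fix i assume "i \<in> UNIV - {j}"
      then have "axis i 1 \<in> {row i ?A |i. i \<noteq> j}" using rows by force
      then show "y$i *s axis i (1::real) \<in> vec.span {row i ?A |i. i \<noteq> j}"
        by (simp add: vec.span_base vec.span_scale)
    qed
    then show ?thesis by (rule vec.span_neg)
  qed
  have d1: "det (\<chi> k. if k = j then row j ?A + ?x else row k ?A) = det ?A"
    by (rule det_row_span[OF span])
  have e1: "row j ?A + ?x = y$j *s axis j 1"
  proof -
    have "y = (\<Sum>i\<in>UNIV. y$i *s axis i (1::real))"
      by (simp add: vec_eq_iff axis_def if_distrib[of "(*) _"] cong: if_cong)
    also have "\<dots> = y$j *s axis j 1 + (\<Sum>i\<in>UNIV - {j}. y$i *s axis i (1::real))"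
      by (simp add: sum.remove[of UNIV j])
    finally show ?thesis using rows by (simp add: algebra_simps)
  qed
  have "det ?A = det (\<chi> k. if k = j then y$j *s axis j (1::real) else row k ?A)"
    using d1 unfolding e1 by simp
  also have "\<dots> = y$j * det (\<chi> k. if k = j then axis j (1::real) else row k ?A)"
    by (rule det_row_mul)
  also have "(\<chi> k. if k = j then axis j (1::real) else row k ?A) = mat 1"
    using rows by (simp add: vec_eq_iff mat_def axis_def)
  finally show ?thesis by simp
qed

lemma det_mat_plus_outer_axis: "det (mat 1 + outer x (axis j 1)) = 1 + x $ j"
proof -
  have "transpose (mat 1 + outer x (axis j 1)) = (\<chi> i. if i = j then axis j 1 + x else axis i 1)"
    by (simp add: vec_eq_iff transpose_def mat_def outer_def axis_def)
  then have "det (mat 1 + outer x (axis j 1)) = (axis j 1 + x) $ j"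
    by (metis det_transpose det_replace_row_axis)
  then show ?thesis by simp
qed

text \<open>The matrix determinant lemma; conjugating by a matrix whose row \<open>j\<close> is \<open>y\<close> reduces it to
  \<open>y = axis j 1\<close>.\<close>
lemma det_mat_plus_outer: "det (mat 1 + outer x y) = 1 + x \<bullet> (y::real^'n)"
proof (cases "y = 0")
  case True then show ?thesis by (simp add: outer_zero_right)
next
  case False
  then obtain j where yj: "y $ j \<noteq> 0" by (auto simp: vec_eq_iff)
  let ?Y = "(\<chi> i. if i = j then y else axis i 1) :: real^'n^'n"
  have "axis j 1 v* ?Y = y"
    by (simp add: vec_eq_iff vector_matrix_mult_def axis_def if_distrib[of "\<lambda>x. x * _"] cong: if_cong)
  then have "?Y ** (mat 1 + outer x y) = (mat 1 + outer (?Y *v x) (axis j 1)) ** ?Y"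
    by (simp add: matrix_add_ldistrib matrix_add_rdistrib matrix_mult_outer outer_mult_matrix)
  then have "det ?Y * det (mat 1 + outer x y) = det (mat 1 + outer (?Y *v x) (axis j 1)) * det ?Y"
    unfolding det_mul[symmetric] by simp
  moreover have "det ?Y \<noteq> 0" using yj by (simp add: det_replace_row_axis)
  ultimately have "det (mat 1 + outer x y) = 1 + (?Y *v x) $ j"
    by (simp add: det_mat_plus_outer_axis)
  also have "(?Y *v x) $ j = x \<bullet> y"
    by (simp add: matrix_vector_mult_def inner_vec_def mult_ac)
  finally show ?thesis .
qed

text \<open>The Schur complement of the pivot \<open>A$j$j\<close>, padded with the identity in row and column \<open>j\<close>
  so that it stays an \<open>n \<times> n\<close> matrix.\<close>
definition schur_complement :: "real^'n^'n \<Rightarrow> 'n \<Rightarrow> real^'n^'n" where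
  "schur_complement A j = (\<chi> i k. if i = j \<or> k = j then (if i = k then 1 else 0)
     else A$i$k - A$i$j * A$j$k / A$j$j)"

lemma symmetric_schur_complement:
  "symmetric_matrix A \<Longrightarrow> symmetric_matrix (schur_complement A j)"
  by (auto simp: symmetric_matrix_def schur_complement_def)

definition schur_eliminator :: "real^'n^'n \<Rightarrow> 'n \<Rightarrow> real^'n^'n" where
  "schur_eliminator A j = mat 1 - outer (\<chi> i. if i = j then 0 else A$i$j / A$j$j) (axis j 1)"

lemma det_schur_eliminator: "det (schur_eliminator A j) = 1"
  using det_mat_plus_outer[of "- (\<chi> i. if i = j then 0 else A$i$j / A$j$j)" "axis j 1"]
  by (simp add: schur_eliminator_def outer_uminus inner_axis)

lemma transpose_schur_eliminator_mult_vec: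
  "i \<noteq> j \<Longrightarrow> (transpose (schur_eliminator A j) *v v) $ i = v $ i"
  by (simp add: schur_eliminator_def transpose_diff transpose_outer matrix_vector_mult_diff_rdistrib
      outer_mult_vec axis_def del: transpose_matrix_vector)

lemma schur_eliminator_congruence:
  fixes A :: "real^'n^'n"
  assumes sym: "symmetric_matrix A" and a: "A$j$j \<noteq> 0"
  shows "schur_eliminator A j ** A ** transpose (schur_eliminator A j)
    = schur_complement A j + (A$j$j - 1) *\<^sub>R outer (axis j 1) (axis j 1)"
proof -
  define a where "a = A$j$j"
  define c :: "real^'n" where "c = (\<chi> i. if i = j then 0 else A$i$j / a)"
  define E where "E = schur_eliminator A j"
  have cj: "c$j = 0" by (simp add: c_def)
  have ca: "i \<noteq> j \<Longrightarrow> c$i * a = A$i$j" for i using a by (simp add: c_def a_def)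
  have Ajk: "A$j$k = A$k$j" for k using sym by (simp add: symmetric_matrix_def)
  have E: "E$i$l = (if i = l then 1 else 0) - (if l = j then c$i else 0)" for i l
    by (simp add: E_def schur_eliminator_def c_def a_def mat_def outer_def axis_def)
  have EA: "(E ** A)$i$k = A$i$k - c$i * A$j$k" for i k
    by (simp add: matrix_matrix_mult_def E left_diff_distrib sum_subtractf
        if_distrib[of "\<lambda>x. x * _"] cong: if_cong)
  have B: "(E ** A ** transpose E)$i$k = A$i$k - c$i * A$j$k - A$i$j * c$k + c$i * a * c$k" for i k
  proof -
    have "(E ** A ** transpose E)$i$k = (\<Sum>l\<in>UNIV. (E ** A)$i$l * E$k$l)"
      by (simp add: matrix_matrix_mult_def transpose_def)
    also have "\<dots> = (E ** A)$i$k - (E ** A)$i$j * c$k"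
      by (simp add: E right_diff_distrib sum_subtractf if_distrib[of "\<lambda>x. _ * x"] cong: if_cong)
    finally show ?thesis by (simp add: EA a_def algebra_simps)
  qed
  have "(E ** A ** transpose E)$j$k = (if k = j then a else 0)" for k
    using ca[of k] Ajk[of k] by (cases "k = j") (simp_all add: B cj a_def mult.commute)
  moreover have "(E ** A ** transpose E)$k$j = (if k = j then a else 0)" for k
    using ca[of k] by (cases "k = j") (simp_all add: B cj a_def)
  moreover have "i \<noteq> j \<Longrightarrow> k \<noteq> j \<Longrightarrow> (E ** A ** transpose E)$i$k = A$i$k - A$i$j * A$j$k / a" for i k
    using ca[of i] a by (simp add: B a_def field_simps)
  ultimately show ?thesis
    unfolding E_def[symmetric] by (simp add: vec_eq_iff schur_complement_def outer_def axis_def a_def)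
qed

lemma det_schur_complement:
  assumes "symmetric_matrix A" and "A$j$j \<noteq> 0"
  shows "det A = A$j$j * det (schur_complement A j)"
proof -
  let ?C = "schur_complement A j"
  have "det A = det (schur_eliminator A j ** A ** transpose (schur_eliminator A j))"
    by (simp add: det_mul det_schur_eliminator)
  also have "\<dots> = det (\<chi> i. if i = j then A$j$j *s row j ?C else row i ?C)"
    unfolding schur_eliminator_congruence[OF assms]
    by (rule arg_cong[of _ _ det]) (simp add: vec_eq_iff schur_complement_def row_def outer_def axis_def)
  also have "\<dots> = A$j$j * det (\<chi> i. if i = j then row j ?C else row i ?C)"
    by (rule det_row_mul)
  also have "(\<chi> i. if i = j then row j ?C else row i ?C) = ?C"
    by (simp add: vec_eq_iff row_def)
  finally show ?thesis .
qed

lemma quad_form_schur_complement: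
  assumes "symmetric_matrix A" and "A$j$j \<noteq> 0" and "v$j = 0"
  shows "quad_form (schur_complement A j) v = quad_form A (transpose (schur_eliminator A j) *v v)"
proof -
  have "quad_form (schur_complement A j) v
      = quad_form (schur_eliminator A j ** A ** transpose (schur_eliminator A j)) v"
    unfolding schur_eliminator_congruence[OF assms(1,2)]
    by (simp add: quad_form_def matrix_vector_mult_add_rdistrib inner_add_right
        scaleR_matrix_vector_assoc[symmetric] outer_mult_vec inner_axis' assms(3))
  then show ?thesis by (simp only: quad_form_congruence)
qed

lemma det_ge_power_of_quad_form_ge:
  fixes A :: "real^'n^'n"
  assumes "0 < m" "finite S" "symmetric_matrix A"
    and id_outside: "\<And>i k. i \<notin> S \<or> k \<notin> S \<Longrightarrow> A$i$k = (if i = k then 1 else 0)"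
    and lower: "\<And>v. (\<And>i. i \<notin> S \<Longrightarrow> v$i = 0) \<Longrightarrow> m * (v \<bullet> v) \<le> quad_form A v"
  shows "m ^ card S \<le> det A"
  using assms(2-)
proof (induction S arbitrary: A rule: finite_induct)
  case empty
  then have "A = mat 1" by (simp add: vec_eq_iff mat_def)
  then show ?case by simp
next
  case (insert j S)
  let ?C = "schur_complement A j"
  have "m * (axis j 1 \<bullet> axis j (1::real)) \<le> quad_form A (axis j 1)"
    by (rule insert.prems(3)) (auto simp: axis_def)
  then have pivot: "m \<le> A$j$j" by (simp add: quad_form_axis inner_axis_axis)
  have "m ^ card S \<le> det ?C"
  proof (rule insert.IH)
    show "symmetric_matrix ?C" by (rule symmetric_schur_complement[OF insert.prems(1)])
    show "?C$i$k = (if i = k then 1 else 0)" if "i \<notin> S \<or> k \<notin> S" for i k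
      using that insert.prems(2)[of i k] insert.prems(2)[of i j] insert.prems(2)[of j k]
      by (auto simp: schur_complement_def)
    fix v :: "real^'n" assume v: "\<And>i. i \<notin> S \<Longrightarrow> v$i = 0"
    then have vj: "v$j = 0" using insert.hyps(2) by blast
    define w where "w = transpose (schur_eliminator A j) *v v"
    have w: "quad_form ?C v = quad_form A w" "\<And>i. i \<noteq> j \<Longrightarrow> w$i = v$i"
      using quad_form_schur_complement[OF insert.prems(1) _ vj] pivot \<open>0 < m\<close>
      by (simp_all add: w_def transpose_schur_eliminator_mult_vec del: transpose_matrix_vector)
    have "v \<bullet> v \<le> w \<bullet> w"
      unfolding inner_vec_def
    proof (intro sum_mono)
      show "v$i \<bullet> v$i \<le> w$i \<bullet> w$i" for i
        using w(2)[of i] vj by (cases "i = j") auto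
    qed
    then have "m * (v \<bullet> v) \<le> m * (w \<bullet> w)" using \<open>0 < m\<close> by simp
    also have "\<dots> \<le> quad_form A w"
      by (rule insert.prems(3)) (use v w(2) in \<open>metis insertCI\<close>)
    finally show "m * (v \<bullet> v) \<le> quad_form ?C v" using w(1) by simp
  qed
  then have "m * m ^ card S \<le> A$j$j * det ?C"
    using pivot \<open>0 < m\<close> by (intro mult_mono) auto
  then show ?case
    using insert.hyps det_schur_complement[of A j] insert.prems(1) pivot \<open>0 < m\<close> by simp
qed

lemma pos_def_ge_det: "pos_def_ge m A \<Longrightarrow> m ^ CARD('n) \<le> det (A::real^'n^'n)"
  using det_ge_power_of_quad_form_ge[of m UNIV A] by (auto simp: pos_def_ge_def)

section \<open>Symmetry of the Hessian\<close>

lemma has_real_derivative_along_line: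
  fixes f :: "real^'n \<Rightarrow> real"
  assumes grad: "\<And>y. (f has_derivative (\<lambda>h. g y \<bullet> h)) (at y)"
  shows "((\<lambda>t. f (p + t *\<^sub>R v)) has_real_derivative g (p + t *\<^sub>R v) \<bullet> v) (at t)"
proof -
  have h1: "((\<lambda>t. p + t *\<^sub>R v) has_derivative (\<lambda>h. h *\<^sub>R v)) (at t)"
    by (auto intro!: derivative_eq_intros)
  have h2: "((\<lambda>t. f (p + t *\<^sub>R v)) has_derivative (\<lambda>h. g (p + t *\<^sub>R v) \<bullet> (h *\<^sub>R v))) (at t)"
    using has_derivative_compose[OF h1 grad] by simp
  show ?thesis unfolding has_field_derivative_def
    by (rule has_derivative_eq_rhs[OF h2]) (auto simp: fun_eq_iff)
qed

lemma second_difference_mean_value: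
  fixes f :: "real^'n \<Rightarrow> real"
  assumes grad: "\<And>y. (f has_derivative (\<lambda>h. g y \<bullet> h)) (at y)" and s: "0 < s"
  obtains \<xi> where "0 < \<xi>" "\<xi> < s"
    "f (y + s *\<^sub>R v + s *\<^sub>R w) - f (y + s *\<^sub>R v) - f (y + s *\<^sub>R w) + f y
      = s * (v \<bullet> (g (y + s *\<^sub>R w + \<xi> *\<^sub>R v) - g (y + \<xi> *\<^sub>R v)))"
proof -
  define \<phi> where "\<phi> t = f ((y + s *\<^sub>R w) + t *\<^sub>R v) - f (y + t *\<^sub>R v)" for t
  have "\<And>t. DERIV \<phi> t :> g (y + s *\<^sub>R w + t *\<^sub>R v) \<bullet> v - g (y + t *\<^sub>R v) \<bullet> v"
    unfolding \<phi>_def by (intro DERIV_diff has_real_derivative_along_line[OF grad])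
  from MVT2[OF s this] obtain \<xi> where "0 < \<xi>" "\<xi> < s"
    "\<phi> s - \<phi> 0 = (s - 0) * (g (y + s *\<^sub>R w + \<xi> *\<^sub>R v) \<bullet> v - g (y + \<xi> *\<^sub>R v) \<bullet> v)"
    by blast
  then show ?thesis
    by (intro that[of \<xi>]) (simp_all add: \<phi>_def algebra_simps inner_diff_right inner_commute)
qed

lemma second_difference_estimate:
  fixes f :: "real^'n \<Rightarrow> real"
  assumes grad: "\<And>y. (f has_derivative (\<lambda>h. g y \<bullet> h)) (at y)"
    and e: "e > 0" and d: "d > 0"
    and near: "\<And>z. norm (z - y) < d \<Longrightarrow> norm (g z - g y - D *v (z - y)) \<le> e * norm (z - y)"
    and s: "s > 0" and sd: "s * (norm v + norm w) < d"
  shows "\<bar>f (y + s *\<^sub>R v + s *\<^sub>R w) - f (y + s *\<^sub>R v) - f (y + s *\<^sub>R w) + f y - s^2 * (v \<bullet> (D *v w))\<bar>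
     \<le> 2 * e * s^2 * norm v * (norm v + norm w)"
proof -
  define N where "N = norm v + norm w"
  obtain \<xi> where \<xi>: "0 < \<xi>" "\<xi> < s" and mv:
    "f (y + s *\<^sub>R v + s *\<^sub>R w) - f (y + s *\<^sub>R v) - f (y + s *\<^sub>R w) + f y
      = s * (v \<bullet> (g (y + s *\<^sub>R w + \<xi> *\<^sub>R v) - g (y + \<xi> *\<^sub>R v)))"
    using second_difference_mean_value[OF grad s] by blast
  define z1 z2 where "z1 = y + s *\<^sub>R w + \<xi> *\<^sub>R v" and "z2 = y + \<xi> *\<^sub>R v"
  define E where "E z = g z - g y - D *v (z - y)" for z
  have err: "norm (E z) \<le> e * (s * N)" if "norm (z - y) \<le> s * N" for z
  proof -
    have "norm (E z) \<le> e * norm (z - y)" unfolding E_def using near that sd by (simp add: N_def)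
    also have "\<dots> \<le> e * (s * N)" using that e by simp
    finally show ?thesis .
  qed
  have "norm (\<xi> *\<^sub>R v) \<le> s * norm v" using \<xi> by (simp add: mult_right_mono)
  then have "norm (z1 - y) \<le> s * N" "norm (z2 - y) \<le> s * N"
    using norm_triangle_ineq[of "s *\<^sub>R w" "\<xi> *\<^sub>R v"] s
    by (simp_all add: z1_def z2_def N_def distrib_left add_increasing2)
  then have "norm (E z1) \<le> e * (s * N)" "norm (E z2) \<le> e * (s * N)" by (simp_all add: err)
  then have "norm (E z1 - E z2) \<le> 2 * e * s * N"
    using norm_triangle_ineq4[of "E z1" "E z2"] by simp
  then have "\<bar>v \<bullet> (E z1 - E z2)\<bar> \<le> norm v * (2 * e * s * N)"
    using Cauchy_Schwarz_ineq2[of v "E z1 - E z2"] mult_left_mono[of _ _ "norm v"] by fastforce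
  moreover have "g z1 - g z2 = E z1 - E z2 + s *\<^sub>R (D *v w)"
    by (simp add: E_def z1_def z2_def matrix_vector_mult_diff_distrib matrix_vector_mult_scaleR
        algebra_simps)
  ultimately have bound: "\<bar>v \<bullet> (g z1 - g z2) - s * (v \<bullet> (D *v w))\<bar> \<le> norm v * (2 * e * s * N)"
    by (simp add: inner_add_right)
  have "f (y + s *\<^sub>R v + s *\<^sub>R w) - f (y + s *\<^sub>R v) - f (y + s *\<^sub>R w) + f y - s^2 * (v \<bullet> (D *v w))
      = s * (v \<bullet> (g z1 - g z2) - s * (v \<bullet> (D *v w)))"
    by (simp add: mv z1_def z2_def power2_eq_square right_diff_distrib)
  then show ?thesis
    using mult_left_mono[OF bound, of s] s by (simp add: abs_mult N_def power2_eq_square mult_ac)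
qed

lemma second_difference_asymptotics:
  fixes f :: "real^'n \<Rightarrow> real"
  assumes grad: "\<And>y. (f has_derivative (\<lambda>h. g y \<bullet> h)) (at y)"
    and hess: "(g has_derivative (\<lambda>h. D *v h)) (at y)" and e: "e > 0"
  obtains d where "d > 0" and "\<And>s. 0 < s \<Longrightarrow> s < d \<Longrightarrow>
    \<bar>f (y + s *\<^sub>R v + s *\<^sub>R w) - f (y + s *\<^sub>R v) - f (y + s *\<^sub>R w) + f y - s^2 * (v \<bullet> (D *v w))\<bar>
      \<le> e * s^2"
proof -
  define N where "N = norm v + norm w + 1"
  have N: "N > 0" "norm v \<le> N" "norm v + norm w \<le> N"
    using norm_ge_zero[of v] norm_ge_zero[of w] unfolding N_def by linarith+
  have "e / (2 * N^2) > 0" using e N by simp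
  then obtain d0 where d0: "d0 > 0" and near: "\<And>z. norm (z - y) < d0 \<Longrightarrow>
      norm (g z - g y - D *v (z - y)) \<le> e / (2 * N^2) * norm (z - y)"
    using hess unfolding has_derivative_at_alt by blast
  show ?thesis
  proof
    show "d0 / N > 0" using d0 N by simp
    fix s assume s: "0 < s" "s < d0 / N"
    have "s * (norm v + norm w) < d0"
      using s N by (smt (verit) mult_left_mono pos_less_divide_eq mult.commute)
    then have "\<bar>f (y + s *\<^sub>R v + s *\<^sub>R w) - f (y + s *\<^sub>R v) - f (y + s *\<^sub>R w) + f y - s^2 * (v \<bullet> (D *v w))\<bar>
        \<le> 2 * (e / (2 * N^2)) * s^2 * norm v * (norm v + norm w)"
      by (intro second_difference_estimate[OF grad \<open>e / (2 * N^2) > 0\<close> d0 near s(1)])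
    also have "\<dots> \<le> 2 * (e / (2 * N^2)) * s^2 * N * N"
      using N e by (intro mult_mono) auto
    also have "\<dots> = e * s^2" using N by (simp add: power2_eq_square)
    finally show "\<bar>f (y + s *\<^sub>R v + s *\<^sub>R w) - f (y + s *\<^sub>R v) - f (y + s *\<^sub>R w) + f y
        - s^2 * (v \<bullet> (D *v w))\<bar> \<le> e * s^2" .
  qed
qed

text \<open>Schwarz's theorem: the second difference quotient is symmetric in \<open>v\<close> and \<open>w\<close>, and it
  tends to both \<open>v \<bullet> (H y *v w)\<close> and \<open>w \<bullet> (H y *v v)\<close>.\<close>
lemma hessian_symmetric:
  fixes f :: "real^'n \<Rightarrow> real"
  assumes grad: "\<And>y. (f has_derivative (\<lambda>h. g y \<bullet> h)) (at y)"
    and hess: "\<And>y. (g has_derivative (\<lambda>h. H y *v h)) (at y)"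
  shows "symmetric_matrix (H y)"
proof (rule symmetric_matrixI)
  fix v w :: "real^'n"
  let ?\<Delta> = "\<lambda>s. f (y + s *\<^sub>R v + s *\<^sub>R w) - f (y + s *\<^sub>R v) - f (y + s *\<^sub>R w) + f y"
  have "\<bar>v \<bullet> (H y *v w) - w \<bullet> (H y *v v)\<bar> \<le> 0 + e" if e: "e > 0" for e
  proof -
    have e2: "e / 2 > 0" using e by simp
    obtain d1 where d1: "d1 > 0" and vw: "\<And>s. 0 < s \<Longrightarrow> s < d1 \<Longrightarrow>
        \<bar>?\<Delta> s - s^2 * (v \<bullet> (H y *v w))\<bar> \<le> e / 2 * s^2"
      using second_difference_asymptotics[OF grad hess[of y] e2, where v = v and w = w] by blast
    obtain d2 where d2: "d2 > 0" and wv': "\<And>s. 0 < s \<Longrightarrow> s < d2 \<Longrightarrow>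
        \<bar>f (y + s *\<^sub>R w + s *\<^sub>R v) - f (y + s *\<^sub>R w) - f (y + s *\<^sub>R v) + f y
          - s^2 * (w \<bullet> (H y *v v))\<bar> \<le> e / 2 * s^2"
      using second_difference_asymptotics[OF grad hess[of y] e2, where v = w and w = v] by blast
    have wv: "\<bar>?\<Delta> s - s^2 * (w \<bullet> (H y *v v))\<bar> \<le> e / 2 * s^2" if "0 < s" "s < d2" for s
    proof -
      have eq: "y + s *\<^sub>R w + s *\<^sub>R v = y + s *\<^sub>R v + s *\<^sub>R w" by (simp add: algebra_simps)
      show ?thesis using wv'[OF that] unfolding eq by linarith
    qed
    define s where "s = min d1 d2 / 2"
    have s: "0 < s" "s < d1" "s < d2" using d1 d2 by (auto simp: s_def)
    have "s^2 * \<bar>v \<bullet> (H y *v w) - w \<bullet> (H y *v v)\<bar>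
        = \<bar>(?\<Delta> s - s^2 * (w \<bullet> (H y *v v))) - (?\<Delta> s - s^2 * (v \<bullet> (H y *v w)))\<bar>"
      by (simp add: abs_mult right_diff_distrib[symmetric])
    also have "\<dots> \<le> \<bar>?\<Delta> s - s^2 * (v \<bullet> (H y *v w))\<bar> + \<bar>?\<Delta> s - s^2 * (w \<bullet> (H y *v v))\<bar>"
      by (rule order_trans[OF abs_triangle_ineq4]) simp
    also have "\<dots> \<le> s^2 * e" using vw[OF s(1,2)] wv[OF s(1,3)] by (simp add: mult.commute)
    finally show ?thesis using s(1) by simp
  qed
  then show "v \<bullet> (H y *v w) = w \<bullet> (H y *v v)"
    using field_le_epsilon[of "\<bar>v \<bullet> (H y *v w) - w \<bullet> (H y *v v)\<bar>" 0] by simp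
qed

section \<open>Strongly self-concordant functions\<close>

lemma local_norm_eq: "local_norm H z d = sqrt (quad_form (H z) d)"
  by (simp add: local_norm_def quad_form_def)

lemma local_norm_scaleR: "local_norm H z (t *\<^sub>R d) = \<bar>t\<bar> * local_norm H z d"
  by (simp add: local_norm_eq real_sqrt_mult)

lemma local_norm_minus_commute: "local_norm H z (a - b) = local_norm H z (b - a)"
  using local_norm_scaleR[of H z "-1" "b - a"] by simp

lemma strongly_self_concordant_quad_form:
  assumes "strongly_self_concordant H M"
  shows "quad_form (H y) v - quad_form (H x) v \<le> M * local_norm H z (y - x) * quad_form (H w) v"
  using assms unfolding strongly_self_concordant_def loewner_le_iff_quad_form by (simp add: mult.assoc)

lemma bounded_linear_inner_mult_vec: "bounded_linear (\<lambda>A::real^'n^'n. x \<bullet> (A *v y))"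
  by (rule linear_conv_bounded_linear[THEN iffD1], rule linearI)
     (simp_all add: matrix_vector_mult_add_rdistrib scaleR_matrix_vector_assoc[symmetric] inner_add_right)

lemma bounded_linear_quad_form: "bounded_linear (\<lambda>A::real^'n^'n. quad_form A v)"
  unfolding quad_form_def by (rule bounded_linear_inner_mult_vec)

lemma bounded_linear_mult_vec: "bounded_linear (\<lambda>A::real^'n^'n. A *v u)"
  by (rule linear_conv_bounded_linear[THEN iffD1], rule linearI)
     (simp_all add: matrix_vector_mult_add_rdistrib scaleR_matrix_vector_assoc)

lemma has_integral_affine: "((\<lambda>t::real. a + b * t) has_integral (a + b / 2)) {0..1}"
proof -
  have "((\<lambda>t::real. t) has_integral ((\<lambda>t. t^2/2) 1 - (\<lambda>t. t^2/2) 0)) {0..1}"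
    by (rule fundamental_theorem_of_calculus)
       (auto intro!: derivative_eq_intros simp: has_real_derivative_iff_has_vector_derivative[symmetric])
  then show ?thesis
    using has_integral_add[OF has_integral_const_real[of a 0 1] has_integral_mult_right[of _ "1/2" _ b]]
    by simp
qed

lemma gradient_increment_integral:
  fixes g :: "real^'n \<Rightarrow> real^'n"
  assumes hess: "\<And>y. (g has_derivative (\<lambda>h. H y *v h)) (at y)"
  shows "((\<lambda>t. H (x + t *\<^sub>R u) *v u) has_integral (g (x + u) - g x)) {0..1}"
proof -
  have "((\<lambda>t. H (x + t *\<^sub>R u) *v u) has_integral (g (x + 1 *\<^sub>R u) - g (x + 0 *\<^sub>R u))) {0..1}"
  proof (rule fundamental_theorem_of_calculus)
    fix t :: real
    have "((\<lambda>t. x + t *\<^sub>R u) has_derivative (\<lambda>h. h *\<^sub>R u)) (at t within {0..1})"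
      by (auto intro!: derivative_eq_intros)
    from has_derivative_compose[OF this hess]
    show "((\<lambda>t. g (x + t *\<^sub>R u)) has_vector_derivative H (x + t *\<^sub>R u) *v u) (at t within {0..1})"
      unfolding has_vector_derivative_def
      by (rule has_derivative_eq_rhs) (simp add: fun_eq_iff matrix_vector_mult_scaleR)
  qed simp
  then show ?thesis by simp
qed

definition mean_hessian :: "(real^'n \<Rightarrow> real^'n^'n) \<Rightarrow> real^'n \<Rightarrow> real^'n \<Rightarrow> real^'n^'n" where
  "mean_hessian H x u = integral {0..1} (\<lambda>t. H (x + t *\<^sub>R u))"

locale strongly_self_concordant_function =
  fixes f :: "real^'n \<Rightarrow> real"
    and g :: "real^'n \<Rightarrow> real^'n"
    and H :: "real^'n \<Rightarrow> real^'n^'n"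
    and \<mu> L M :: real
  assumes grad: "\<And>y. (f has_derivative (\<lambda>h. g y \<bullet> h)) (at y)"
    and hess: "\<And>y. (g has_derivative (\<lambda>h. H y *v h)) (at y)"
    and mu_pos: "0 < \<mu>" and mu_le_L: "\<mu> \<le> L"
    and bounds: "\<And>y. loewner_le (\<mu> *\<^sub>R mat 1) (H y) \<and> loewner_le (H y) (L *\<^sub>R mat 1)"
    and ssc: "strongly_self_concordant H M"
begin

lemma L_pos: "0 < L"
  using mu_pos mu_le_L by simp

lemma condition_number_ge_1: "1 \<le> L / \<mu>"
  using mu_pos mu_le_L by simp

lemma M_nonneg: "0 \<le> M"
  using ssc by (simp add: strongly_self_concordant_def)

lemma hessian_ge: "\<mu> * (v \<bullet> v) \<le> quad_form (H y) v"
  using bounds[of y] by (simp add: loewner_le_iff_quad_form)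

lemma hessian_le: "quad_form (H y) v \<le> L * (v \<bullet> v)"
  using bounds[of y] by (simp add: loewner_le_iff_quad_form)

lemma pos_def_hessian: "pos_def_ge \<mu> (H y)"
  using hessian_symmetric[OF grad hess] hessian_ge mu_pos by (simp add: pos_def_ge_def)

lemma hessian_quad_nonneg: "0 \<le> quad_form (H y) v"
  by (rule pos_def_ge_quad_nonneg[OF pos_def_hessian])

lemma local_norm_nonneg: "0 \<le> local_norm H z d"
  by (simp add: local_norm_eq hessian_quad_nonneg)

lemma local_norm_le: "local_norm H z d \<le> sqrt L * norm d"
  using real_sqrt_le_mono[OF hessian_le[of z d]]
  by (simp add: local_norm_eq real_sqrt_mult norm_eq_sqrt_inner)

lemma hessian_variation:
  "quad_form (H y) v - quad_form (H x) v \<le> M * local_norm H z (y - x) * quad_form (H w) v"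
  by (rule strongly_self_concordant_quad_form[OF ssc])

lemma hessian_diff_quad_bound:
  "\<bar>quad_form (H y - H x) v\<bar> \<le> (M * sqrt L * L * norm (y - x)) * quad_form (mat 1) v"
proof -
  have "quad_form (H a) v - quad_form (H b) v \<le> (M * sqrt L * L * norm (y - x)) * (v \<bullet> v)"
    if "norm (a - b) = norm (y - x)" for a b
  proof -
    have "quad_form (H a) v - quad_form (H b) v \<le> M * local_norm H b (a - b) * quad_form (H b) v"
      by (rule hessian_variation)
    also have "\<dots> \<le> M * (sqrt L * norm (a - b)) * (L * (v \<bullet> v))"
      by (intro mult_mono local_norm_le hessian_le M_nonneg mult_nonneg_nonneg local_norm_nonneg
          hessian_quad_nonneg) (auto intro: less_imp_le[OF L_pos])
    finally show ?thesis using that by (simp add: mult_ac)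
  qed
  from this[of y x] this[of x y] show ?thesis by (simp add: abs_le_iff norm_minus_commute)
qed

lemma hessian_lipschitz: "(real (CARD('n) * CARD('n)) * (M * sqrt L * L))-lipschitz_on UNIV H"
proof (rule lipschitz_onI)
  fix y x :: "real^'n"
  let ?C = "M * sqrt L * L * norm (y - x)"
  have entry: "\<bar>(H y - H x) $ i $ j\<bar> \<le> ?C" for i j
  proof -
    from symmetric_bilinear_bound[OF symmetric_matrix_mat _ _ hessian_diff_quad_bound[of y x],
        where x = "axis i 1" and y = "axis j 1"]
    show ?thesis
      using hessian_symmetric[OF grad hess]
      by (simp add: matrix_vector_mult_basis inner_axis' column_def inner_axis_axis)
  qed
  have "norm (H y - H x) \<le> (\<Sum>i\<in>UNIV. norm ((H y - H x) $ i))"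
    unfolding norm_vec_def by (rule L2_set_le_sum) simp
  also have "\<dots> \<le> (\<Sum>i\<in>(UNIV::'n set). \<Sum>j\<in>(UNIV::'n set). \<bar>(H y - H x) $ i $ j\<bar>)"
    by (intro sum_mono norm_le_l1_cart)
  also have "\<dots> \<le> (\<Sum>i\<in>(UNIV::'n set). \<Sum>j\<in>(UNIV::'n set). ?C)"
    by (intro sum_mono entry)
  finally show "dist (H y) (H x) \<le> real (CARD('n) * CARD('n)) * (M * sqrt L * L) * dist y x"
    by (simp add: dist_norm mult_ac)
  show "0 \<le> real (CARD('n) * CARD('n)) * (M * sqrt L * L)"
    using M_nonneg L_pos by simp
qed

lemma hessian_line_integrable: "(\<lambda>t::real. H (x + t *\<^sub>R u)) integrable_on {0..1}"
proof (rule integrable_continuous_interval)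
  have "continuous_on {0..1} (H \<circ> (\<lambda>t::real. x + t *\<^sub>R u))"
    by (intro continuous_on_compose continuous_intros continuous_on_subset[OF
          lipschitz_on_continuous_on[OF hessian_lipschitz]]) simp
  then show "continuous_on {0..1} (\<lambda>t::real. H (x + t *\<^sub>R u))" by (simp add: o_def)
qed

lemma has_integral_mean_hessian:
  assumes "bounded_linear h"
  shows "((\<lambda>t. h (H (x + t *\<^sub>R u))) has_integral h (mean_hessian H x u)) {0..1}"
  using has_integral_linear[OF integrable_integral[OF hessian_line_integrable] assms]
  by (simp add: o_def mean_hessian_def)

lemma symmetric_mean_hessian: "symmetric_matrix (mean_hessian H x u)"
proof (rule symmetric_matrixI)
  fix a b :: "real^'n"
  have ab: "((\<lambda>t. a \<bullet> (H (x + t *\<^sub>R u) *v b)) has_integral a \<bullet> (mean_hessian H x u *v b)) {0..1}"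
    and ba: "((\<lambda>t. b \<bullet> (H (x + t *\<^sub>R u) *v a)) has_integral b \<bullet> (mean_hessian H x u *v a)) {0..1}"
    by (rule has_integral_mean_hessian[OF bounded_linear_inner_mult_vec])+
  have "(\<lambda>t. a \<bullet> (H (x + t *\<^sub>R u) *v b)) = (\<lambda>t. b \<bullet> (H (x + t *\<^sub>R u) *v a))"
    using symmetric_matrix_inner_swap[OF hessian_symmetric[OF grad hess]] by auto
  with ab ba show "a \<bullet> (mean_hessian H x u *v b) = b \<bullet> (mean_hessian H x u *v a)"
    using has_integral_unique by metis
qed

lemma mean_hessian_le:
  "quad_form (mean_hessian H x u) v \<le> (1 + M * local_norm H x u / 2) * quad_form (H x) v"
proof -
  let ?r = "local_norm H x u" and ?q = "quad_form (H x) v"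
  have "quad_form (mean_hessian H x u) v \<le> ?q + (M * ?r * ?q) / 2"
  proof (rule has_integral_le[OF has_integral_mean_hessian[OF bounded_linear_quad_form] has_integral_affine])
    fix t :: real assume t: "t \<in> {0..1}"
    have "quad_form (H (x + t *\<^sub>R u)) v - ?q \<le> M * local_norm H x ((x + t *\<^sub>R u) - x) * ?q"
      by (rule hessian_variation)
    also have "\<dots> = M * ?r * ?q * t" using t by (simp add: local_norm_scaleR)
    finally show "quad_form (H (x + t *\<^sub>R u)) v \<le> ?q + M * ?r * ?q * t" by simp
  qed
  then show ?thesis by (simp add: algebra_simps)
qed

lemma mean_hessian_ge:
  "quad_form (H x) v - quad_form (mean_hessian H x u) v \<le> (M * local_norm H x u / 2) * quad_form (H x) v"
proof -
  let ?r = "local_norm H x u" and ?q = "quad_form (H x) v"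
  have "?q + (- (M * ?r * ?q)) / 2 \<le> quad_form (mean_hessian H x u) v"
  proof (rule has_integral_le[OF has_integral_affine has_integral_mean_hessian[OF bounded_linear_quad_form]])
    fix t :: real assume t: "t \<in> {0..1}"
    have "?q - quad_form (H (x + t *\<^sub>R u)) v \<le> M * local_norm H x (x - (x + t *\<^sub>R u)) * ?q"
      by (rule hessian_variation)
    also have "\<dots> = M * ?r * ?q * t"
      using t local_norm_scaleR[of H x "- t" u] by simp
    finally show "?q + - (M * ?r * ?q) * t \<le> quad_form (H (x + t *\<^sub>R u)) v" by simp
  qed
  then show ?thesis by (simp add: algebra_simps)
qed

text \<open>Compare \<open>H (x + u)\<close> with each \<open>H (x + s u)\<close> along the segment, then average over \<open>s\<close>.\<close>
lemma hessian_endpoint_le_mean_hessian: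
  "quad_form (H (x + u)) v \<le> (1 + M * local_norm H x u / 2) * quad_form (mean_hessian H x u) v"
proof -
  let ?r = "local_norm H x u" and ?q1 = "quad_form (H (x + u)) v"
  let ?J = "quad_form (mean_hessian H x u) v"
  have J: "((\<lambda>t. quad_form (H (x + t *\<^sub>R u)) v) has_integral ?J) {0..1}"
    by (rule has_integral_mean_hessian[OF bounded_linear_quad_form])
  have each: "?q1 - ?J \<le> (M * ?r / 2) * quad_form (H (x + s *\<^sub>R u)) v" if s: "s \<in> {0..1}" for s :: real
  proof -
    let ?qs = "quad_form (H (x + s *\<^sub>R u)) v"
    have "(?q1 - M * ?r * ?qs) + (M * ?r * ?qs) / 2 \<le> ?J"
    proof (rule has_integral_le[OF has_integral_affine J])
      fix t :: real assume t: "t \<in> {0..1}"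
      have "?q1 - quad_form (H (x + t *\<^sub>R u)) v
          \<le> M * local_norm H x ((x + u) - (x + t *\<^sub>R u)) * ?qs"
        by (rule hessian_variation)
      also have "(x + u) - (x + t *\<^sub>R u) = (1 - t) *\<^sub>R u" by (simp add: algebra_simps)
      also have "M * local_norm H x ((1 - t) *\<^sub>R u) * ?qs = M * ?r * ?qs * (1 - t)"
        using t by (simp add: local_norm_scaleR)
      finally show "(?q1 - M * ?r * ?qs) + (M * ?r * ?qs) * t \<le> quad_form (H (x + t *\<^sub>R u)) v"
        by (simp add: algebra_simps)
    qed
    then show ?thesis by (simp add: algebra_simps)
  qed
  have "?q1 - ?J \<le> (M * ?r / 2) * ?J"
  proof (rule has_integral_le[OF _ has_integral_mult_right[OF J]])
    show "((\<lambda>s::real. ?q1 - ?J) has_integral (?q1 - ?J)) {0..1}"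
      using has_integral_const_real[of "?q1 - ?J" 0 1] by simp
  qed (rule each)
  then show ?thesis by (simp add: algebra_simps)
qed

lemma gradient_increment: "g (x + u) = g x + mean_hessian H x u *v u"
proof -
  have "mean_hessian H x u *v u = g (x + u) - g x"
    by (rule has_integral_unique[OF has_integral_mean_hessian[OF bounded_linear_mult_vec]
          gradient_increment_integral[OF hess]])
  then show ?thesis by simp
qed

end

section \<open>One step of the SR1 method with correction\<close>

lemma dual_form_pos:
  assumes A: "pos_def_ge m A" and "v \<noteq> 0" shows "0 < dual_form A v"
proof -
  have "matrix_inv A *v v \<noteq> 0"
    using assms pos_def_ge_invertible[OF A] matrix_inv_mult_vec(1) by (metis matrix_vector_mult_0_right)
  then show ?thesis by (simp add: dual_form_eq_quad_form[OF A] pos_def_ge_quad_pos[OF A])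
qed

lemma step_length_bound:
  assumes H0: "pos_def_ge \<mu> H0" and G: "symmetric_matrix G" and \<rho>: "0 \<le> \<rho>"
    and HG: "\<And>v. quad_form H0 v \<le> (1 + \<rho>) * quad_form G v"
  shows "sqrt (quad_form H0 (matrix_inv G *v z)) \<le> (1 + \<rho>) * sqrt (dual_form H0 z)"
proof -
  have "pos_def_ge (\<mu> / (1 + \<rho>)) G" by (rule pos_def_ge_of_le[OF H0 G HG]) (use \<rho> in simp)
  then have "invertible G" by (rule pos_def_ge_invertible)
  define p where "p = matrix_inv G *v z"
  have "quad_form H0 p \<le> (1 + \<rho>) * quad_form G p" by (rule HG)
  also have "quad_form G p = z \<bullet> p" by (simp add: quad_form_def p_def \<open>invertible G\<close> inner_commute)
  also have "(1 + \<rho>) * (z \<bullet> p) \<le> ((1 + \<rho>) * sqrt (dual_form H0 z)) * sqrt (quad_form H0 p)"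
    using dual_Cauchy_Schwarz[OF H0, of z p] \<rho> by (simp add: mult_left_mono mult.assoc)
  finally show ?thesis unfolding p_def
    by (intro sqrt_le_of_le_mult_sqrt pos_def_ge_quad_nonneg[OF H0])
       (use \<rho> dual_form_nonneg[OF H0] in simp_all)
qed

lemma quasi_newton_residual_bound:
  assumes H0: "pos_def_ge \<mu> H0" and G: "symmetric_matrix G" and \<rho>: "0 \<le> \<rho>" and \<eta>: "1 \<le> \<eta>"
    and HG: "\<And>v. quad_form H0 v \<le> (1 + \<rho>) * quad_form G v"
    and GH: "\<And>v. quad_form G v \<le> \<eta> * quad_form H0 v"
  shows "sqrt (dual_form H0 (z - H0 *v (matrix_inv G *v z))) \<le> max \<rho> (1 - 1/\<eta>) * sqrt (dual_form H0 z)"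
proof -
  have pG: "pos_def_ge (\<mu> / (1 + \<rho>)) G" by (rule pos_def_ge_of_le[OF H0 G HG]) (use \<rho> in simp)
  have iG: "invertible G" and iH0: "invertible H0"
    using pG H0 by (simp_all add: pos_def_ge_invertible)
  have sH0: "symmetric_matrix H0" using H0 by (simp add: pos_def_ge_def)
  define y where "y = z - H0 *v (matrix_inv G *v z)"
  define D where "D = matrix_inv H0 - matrix_inv G"
  have sD: "symmetric_matrix D"
    unfolding D_def using symmetric_matrix_inv[OF sH0 iH0] symmetric_matrix_inv[OF G iG] by simp
  have "\<bar>quad_form D a\<bar> \<le> max \<rho> (1 - 1/\<eta>) * dual_form H0 a" for a
  proof -
    have "dual_form G a \<le> (1 + \<rho>) * dual_form H0 a"
      by (rule dual_form_le_scaled[OF H0 pG _ HG]) (use \<rho> in simp)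
    moreover have "dual_form H0 a \<le> \<eta> * dual_form G a"
      by (rule dual_form_le_scaled[OF pG H0 _ GH]) (use \<eta> in simp)
    then have "dual_form H0 a / \<eta> \<le> dual_form G a" using \<eta> by (simp add: field_simps)
    ultimately have "- (\<rho> * dual_form H0 a) \<le> quad_form D a" "quad_form D a \<le> (1 - 1/\<eta>) * dual_form H0 a"
      by (simp_all add: D_def quad_form_matrix_inv algebra_simps)
    moreover have "\<rho> * dual_form H0 a \<le> max \<rho> (1 - 1/\<eta>) * dual_form H0 a"
      and "(1 - 1/\<eta>) * dual_form H0 a \<le> max \<rho> (1 - 1/\<eta>) * dual_form H0 a"
      using dual_form_nonneg[OF H0, of a] by (simp_all add: mult_right_mono)
    ultimately show ?thesis by (simp add: abs_le_iff)
  qed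
  then have "\<bar>z \<bullet> (D *v y)\<bar> \<le> max \<rho> (1 - 1/\<eta>) * (sqrt (dual_form H0 z) * sqrt (dual_form H0 y))"
    using symmetric_bilinear_bound[OF symmetric_matrix_inv[OF sH0 iH0] _ sD, of "max \<rho> (1 - 1/\<eta>)" z y]
      dual_form_pos[OF H0] by (simp add: quad_form_matrix_inv)
  moreover have "z \<bullet> (D *v y) = dual_form H0 y"
  proof -
    have "D *v z = matrix_inv H0 *v y"
      using iH0 by (simp add: D_def y_def matrix_vector_mult_diff_rdistrib matrix_vector_mult_diff_distrib)
    then show ?thesis
      using symmetric_matrix_inner_swap[OF sD, of z y] by (simp add: dual_form_def inner_commute)
  qed
  moreover have "0 \<le> max \<rho> (1 - 1/\<eta>)" using \<rho> by simp
  ultimately show ?thesis unfolding y_def[symmetric]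
    by (intro sqrt_le_of_le_mult_sqrt dual_form_nonneg[OF H0])
      (simp_all add: mult_ac dual_form_nonneg[OF H0])
qed

lemma mean_hessian_residual_bound:
  assumes H0: "pos_def_ge \<mu> H0" and J: "symmetric_matrix J" and \<rho>: "0 \<le> \<rho>"
    and J1: "\<And>v. quad_form J v \<le> (1 + \<rho>) * quad_form H0 v"
    and J2: "\<And>v. quad_form H0 v - quad_form J v \<le> \<rho> * quad_form H0 v"
  shows "sqrt (dual_form H0 ((H0 - J) *v p)) \<le> \<rho> * sqrt (quad_form H0 p)"
proof -
  have sH0: "symmetric_matrix H0" using H0 by (simp add: pos_def_ge_def)
  have sD: "symmetric_matrix (H0 - J)" using sH0 J by simp
  define q where "q = matrix_inv H0 *v ((H0 - J) *v p)"
  have "\<bar>quad_form (H0 - J) v\<bar> \<le> \<rho> * quad_form H0 v" for v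
    using J1[of v] J2[of v] by (simp add: abs_le_iff algebra_simps)
  then have "\<bar>p \<bullet> ((H0 - J) *v q)\<bar> \<le> \<rho> * (sqrt (quad_form H0 p) * sqrt (quad_form H0 q))"
    using symmetric_bilinear_bound[OF sH0 pos_def_ge_quad_pos[OF H0] sD] by blast
  moreover have "p \<bullet> ((H0 - J) *v q) = dual_form H0 ((H0 - J) *v p)"
    using symmetric_matrix_inner_swap[OF sD, of p q] by (simp add: dual_form_def q_def inner_commute)
  moreover have "quad_form H0 q = dual_form H0 ((H0 - J) *v p)"
    by (simp add: dual_form_eq_quad_form[OF H0] q_def)
  ultimately show ?thesis
    by (intro sqrt_le_of_le_mult_sqrt dual_form_nonneg[OF H0])
      (use \<rho> in \<open>simp_all add: mult_ac pos_def_ge_quad_nonneg[OF H0]\<close>)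
qed

lemma newton_step_bound:
  assumes H0: "pos_def_ge \<mu> H0" and H1: "pos_def_ge \<mu>' H1"
    and J: "symmetric_matrix J" and G: "symmetric_matrix G"
    and \<rho>: "0 \<le> \<rho>" and \<rho>': "0 \<le> \<rho>'" and \<eta>: "1 \<le> \<eta>"
    and HG: "\<And>v. quad_form H0 v \<le> (1 + \<rho>') * quad_form G v"
    and GH: "\<And>v. quad_form G v \<le> \<eta> * quad_form H0 v"
    and J1: "\<And>v. quad_form J v \<le> (1 + \<rho>) * quad_form H0 v"
    and J2: "\<And>v. quad_form H0 v - quad_form J v \<le> \<rho> * quad_form H0 v"
    and H01: "\<And>v. quad_form H0 v \<le> (1 + 2 * \<rho>) * quad_form H1 v"
  shows "sqrt (dual_form H1 (z - J *v (matrix_inv G *v z)))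
    \<le> (1 + \<rho>) * (max \<rho>' (1 - 1/\<eta>) + \<rho> * (1 + \<rho>')) * sqrt (dual_form H0 z)"
proof -
  define p where "p = matrix_inv G *v z"
  define lam where "lam = sqrt (dual_form H0 z)"
  have "z - J *v p = (z - H0 *v p) + (H0 - J) *v p"
    by (simp add: matrix_vector_mult_diff_rdistrib)
  then have "sqrt (dual_form H0 (z - J *v p))
      \<le> sqrt (dual_form H0 (z - H0 *v p)) + sqrt (dual_form H0 ((H0 - J) *v p))"
    using dual_form_sqrt_triangle[OF H0] by metis
  also have "\<dots> \<le> max \<rho>' (1 - 1/\<eta>) * lam + \<rho> * ((1 + \<rho>') * lam)"
    using quasi_newton_residual_bound[OF H0 G \<rho>' \<eta> HG GH, of z]
      mean_hessian_residual_bound[OF H0 J \<rho> J1 J2, of p]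
      step_length_bound[OF H0 G \<rho>' HG, of z] \<rho>
    unfolding p_def lam_def by (smt (verit) mult_left_mono)
  finally have H0_bound: "sqrt (dual_form H0 (z - J *v p)) \<le> (max \<rho>' (1 - 1/\<eta>) + \<rho> * (1 + \<rho>')) * lam"
    by (simp add: algebra_simps)
  have "dual_form H1 (z - J *v p) \<le> (1 + 2 * \<rho>) * dual_form H0 (z - J *v p)"
    by (rule dual_form_le_scaled[OF H0 H1 _ H01]) (use \<rho> in simp)
  then have "sqrt (dual_form H1 (z - J *v p)) \<le> sqrt (1 + 2 * \<rho>) * sqrt (dual_form H0 (z - J *v p))"
    by (metis real_sqrt_le_mono real_sqrt_mult)
  also have "\<dots> \<le> (1 + \<rho>) * ((max \<rho>' (1 - 1/\<eta>) + \<rho> * (1 + \<rho>')) * lam)"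
  proof (rule mult_mono[OF _ H0_bound])
    show "sqrt (1 + 2 * \<rho>) \<le> 1 + \<rho>"
      using \<rho> by (intro real_le_lsqrt) (simp_all add: power2_eq_square algebra_simps)
  qed (use \<rho> dual_form_nonneg[OF H0] in auto)
  finally show ?thesis by (simp add: p_def lam_def mult_ac)
qed

text \<open>The SR1 update divides the determinant by \<open>1 + sr1_angle J T u ^ 2\<close> (see \<open>det_SR1\<close>).
  If \<open>(T - J) *v u = 0\<close> the update is trivial and the angle is \<open>sqrt (0 / 0) = 0\<close>.\<close>
definition sr1_angle :: "real^'n^'n \<Rightarrow> real^'n^'n \<Rightarrow> real^'n \<Rightarrow> real" where
  "sr1_angle J T u = (let w = (T - J) *v u in sqrt ((w \<bullet> (matrix_inv T *v w)) / (u \<bullet> w - w \<bullet> (matrix_inv T *v w))))"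

lemma rank_one_update_mult_vec: "(T - c *\<^sub>R outer w w) *v v = T *v v - (c * (w \<bullet> v)) *\<^sub>R w"
  by (simp add: matrix_vector_mult_diff_rdistrib scaleR_matrix_vector_assoc[symmetric] outer_mult_vec)

lemma rank_one_update_factor:
  assumes "T *v s = w"
  shows "T - c *\<^sub>R outer w w = T ** (mat 1 + outer ((- c) *\<^sub>R s) w)"
  using assms
  by (simp add: matrix_add_ldistrib matrix_diff_ldistrib matrix_scalar_ac matrix_mult_outer
      outer_uminus outer_scaleR scaleR_matrix_vector_assoc[symmetric])

context
  fixes J T :: "real^'n^'n" and u :: "real^'n" and m :: real
  assumes J: "pos_def_ge m J" and T: "symmetric_matrix T"
    and JT: "\<And>v. quad_form J v \<le> quad_form T v"
begin

private abbreviation (input) "w \<equiv> (T - J) *v u"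
private abbreviation (input) "a \<equiv> u \<bullet> ((T - J) *v u)"

private lemma symmetric_diff: "symmetric_matrix (T - J)"
  using J T by (simp add: pos_def_ge_def)

private lemma diff_psd: "0 \<le> quad_form (T - J) v"
  using JT[of v] by simp

lemma SR1_eq: "SR1 J T u = T - (1 / a) *\<^sub>R outer w w"
proof (cases "w = 0")
  case False
  have "(T - J) ** outer u u ** (T - J) = outer w w"
    by (simp add: matrix_mult_outer outer_mult_matrix transpose_symmetric_matrix[OF symmetric_diff])
  then show ?thesis using False by (simp add: SR1_def)
qed (simp add: SR1_def outer_zero_right)

private lemma a_eq: "a = quad_form (T - J) u"
  by (simp add: quad_form_def)

private lemma inner_w_sq_le: "(w \<bullet> v)^2 \<le> quad_form (T - J) v * a"
  using psd_Cauchy_Schwarz[OF symmetric_diff diff_psd, of v u] by (simp add: a_eq inner_commute)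

private lemma a_pos: "w \<noteq> 0 \<Longrightarrow> 0 < a"
  using inner_w_sq_le[of w] diff_psd[of w] diff_psd[of u]
  by (metis a_eq inner_gt_zero_iff less_eq_real_def mult_zero_right not_le zero_less_power)

lemma quad_form_SR1: "quad_form (SR1 J T u) v = quad_form T v - (w \<bullet> v)^2 / a"
  by (simp add: SR1_eq quad_form_diff quad_form_outer_self)

lemma symmetric_SR1: "symmetric_matrix (SR1 J T u)"
  using T by (simp add: SR1_eq symmetric_matrix_outer)

lemma SR1_ge: "quad_form J v \<le> quad_form (SR1 J T u) v"
proof (cases "a = 0")
  case False
  then have "(w \<bullet> v)^2 / a \<le> quad_form (T - J) v"
    using inner_w_sq_le[of v] diff_psd[of u] by (simp add: a_eq divide_le_eq mult.commute)
  then show ?thesis by (simp add: quad_form_SR1)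
qed (simp add: quad_form_SR1 JT)

lemma SR1_le: "quad_form (SR1 J T u) v \<le> quad_form T v"
  using diff_psd[of u] by (simp add: quad_form_SR1 a_eq)

lemma pos_def_SR1: "pos_def_ge m (SR1 J T u)"
  using pos_def_ge_of_le[OF J symmetric_SR1, of 1] by (simp add: SR1_ge)

lemma pos_def_T: "pos_def_ge m T"
  using pos_def_ge_of_le[OF J T, of 1] by (simp add: JT)

lemma SR1_mult_vec: "SR1 J T u *v u = J *v u"
proof (cases "w = 0")
  case True then show ?thesis by (simp add: SR1_def matrix_vector_mult_diff_rdistrib)
next
  case False
  have "SR1 J T u *v u = T *v u - (1 / a * (w \<bullet> u)) *\<^sub>R w"
    unfolding SR1_eq rank_one_update_mult_vec ..
  also have "w \<bullet> u = a" by (rule inner_commute)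
  finally show ?thesis using a_pos[OF False] by (simp add: matrix_vector_mult_diff_rdistrib)
qed

private lemma nondegenerate:
  assumes "w \<noteq> 0"
  shows "0 < (matrix_inv T *v w) \<bullet> w" "(matrix_inv T *v w) \<bullet> w < a"
    "SR1 J T u *v (matrix_inv T *v w) = (1 - ((matrix_inv T *v w) \<bullet> w) / a) *\<^sub>R w"
proof -
  define s where "s = matrix_inv T *v w"
  define b where "b = s \<bullet> w"
  define \<alpha> where "\<alpha> = a"
  have Ts: "T *v s = w" using pos_def_ge_invertible[OF pos_def_T] by (simp add: s_def)
  then have "s \<noteq> 0" using assms by auto
  have "b = quad_form T s" by (simp add: b_def quad_form_def Ts)
  then have b: "0 < b" using pos_def_ge_quad_pos[OF pos_def_T \<open>s \<noteq> 0\<close>] by simp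
  then show "0 < (matrix_inv T *v w) \<bullet> w" by (simp add: b_def s_def)
  have "SR1 J T u *v s = w - (1 / a * (w \<bullet> s)) *\<^sub>R w"
    unfolding SR1_eq rank_one_update_mult_vec Ts ..
  then have G1s: "SR1 J T u *v s = (1 - b / \<alpha>) *\<^sub>R w"
    by (simp add: b_def \<alpha>_def scaleR_diff_left inner_commute)
  then show "SR1 J T u *v (matrix_inv T *v w) = (1 - ((matrix_inv T *v w) \<bullet> w) / a) *\<^sub>R w"
    by (simp add: s_def b_def \<alpha>_def)
  have "0 < quad_form (SR1 J T u) s" by (rule pos_def_ge_quad_pos[OF pos_def_SR1 \<open>s \<noteq> 0\<close>])
  also have "quad_form (SR1 J T u) s = (1 - b / \<alpha>) * b"
    by (simp add: quad_form_def G1s b_def)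
  finally have "b < \<alpha>"
    using b a_pos[OF assms] by (simp add: \<alpha>_def zero_less_mult_iff field_simps)
  then show "(matrix_inv T *v w) \<bullet> w < a" by (simp add: s_def b_def \<alpha>_def)
qed

private lemma sr1_angle_eq:
  "sr1_angle J T u = sqrt ((matrix_inv T *v w) \<bullet> w / (a - (matrix_inv T *v w) \<bullet> w))"
  unfolding sr1_angle_def Let_def by (simp only: inner_commute[of "(T - J) *v u"])

lemma sr1_angle_nonneg: "0 \<le> sr1_angle J T u"
  using nondegenerate(1,2) by (cases "w = 0") (simp_all add: sr1_angle_eq)

lemma det_SR1: "det (SR1 J T u) * (1 + (sr1_angle J T u)^2) = det T"
proof (cases "w = 0")
  case True then show ?thesis by (simp add: SR1_def sr1_angle_def)
next
  case False
  define s where "s = matrix_inv T *v w"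
  define b where "b = s \<bullet> w"
  define \<alpha> where "\<alpha> = a"
  have b: "0 < b" "b < \<alpha>" using nondegenerate[OF False] by (simp_all add: s_def b_def \<alpha>_def)
  have Ts: "T *v s = w" using pos_def_ge_invertible[OF pos_def_T] by (simp add: s_def)
  have "det (SR1 J T u) = det T * (1 - b / \<alpha>)"
    unfolding SR1_eq rank_one_update_factor[OF Ts] det_mul det_mat_plus_outer
    by (simp add: b_def \<alpha>_def inner_commute)
  moreover have "(sr1_angle J T u)^2 = b / (\<alpha> - b)"
    using b by (simp add: sr1_angle_eq s_def b_def \<alpha>_def)
  moreover have "(1 - b / \<alpha>) * (1 + b / (\<alpha> - b)) = 1" using b by (simp add: field_simps)
  ultimately show ?thesis by (metis mult.assoc mult.right_neutral)
qed

lemma dual_form_SR1_residual: "sqrt (dual_form (SR1 J T u) w) \<le> sqrt (quad_form T u) * sr1_angle J T u"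
proof (cases "w = 0")
  case True
  then show ?thesis by (simp add: dual_form_def sr1_angle_nonneg pos_def_ge_quad_nonneg[OF pos_def_T])
next
  case False
  define s where "s = matrix_inv T *v w"
  define b where "b = s \<bullet> w"
  define \<alpha> where "\<alpha> = a"
  have b: "0 < b" "b < \<alpha>" using nondegenerate[OF False] by (simp_all add: s_def b_def \<alpha>_def)
  have "SR1 J T u *v ((1 / (1 - b / \<alpha>)) *\<^sub>R s) = w"
    using nondegenerate(3)[OF False] b by (simp add: matrix_vector_mult_scaleR s_def b_def \<alpha>_def)
  then have "matrix_inv (SR1 J T u) *v w = (1 / (1 - b / \<alpha>)) *\<^sub>R s"
    using pos_def_ge_invertible[OF pos_def_SR1] by (metis matrix_inv_mult_vec(2))
  then have "dual_form (SR1 J T u) w = b / (1 - b / \<alpha>)"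
    by (simp add: dual_form_def b_def inner_commute)
  also have "\<dots> = \<alpha> * (b / (\<alpha> - b))" using b by (simp add: field_simps)
  also have "b / (\<alpha> - b) = (sr1_angle J T u)^2"
    using b by (simp add: sr1_angle_eq s_def b_def \<alpha>_def)
  finally have "sqrt (dual_form (SR1 J T u) w) = sqrt \<alpha> * sr1_angle J T u"
    by (simp add: real_sqrt_mult sr1_angle_nonneg)
  also have "\<dots> \<le> sqrt (quad_form T u) * sr1_angle J T u"
    using pos_def_ge_quad_nonneg[OF J, of u]
    by (intro mult_right_mono real_sqrt_le_mono) (simp_all add: \<alpha>_def a_eq sr1_angle_nonneg)
  finally show ?thesis .
qed

end

lemma SR1_step_bound:
  fixes J G :: "real^'n^'n" and z :: "real^'n"
  assumes J: "pos_def_ge m J" and G: "pos_def_ge m' G" and c: "1 \<le> c"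
    and JG: "\<And>v. quad_form J v \<le> c * quad_form G v"
  defines "u \<equiv> - (matrix_inv G *v z)"
  shows "sqrt (dual_form (SR1 J (c *\<^sub>R G) u) (z + J *v u))
    \<le> sqrt (c * dual_form G z) * (sr1_angle J (c *\<^sub>R G) u + (1 - 1/c))"
proof -
  let ?T = "c *\<^sub>R G" and ?G1 = "SR1 J (c *\<^sub>R G) u"
  have T: "symmetric_matrix ?T" using G by (simp add: pos_def_ge_def)
  have JT: "\<And>v. quad_form J v \<le> quad_form ?T v" using JG by simp
  note G1 = pos_def_SR1[OF J T JT, of u]
  have Gu: "G *v u = - z" using pos_def_ge_invertible[OF G] by (simp add: u_def vec.neg)
  have Tu: "quad_form G u = dual_form G z"
    using dual_form_mult_vec[OF G, of "- u"] by (simp add: Gu vec.neg)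
  have "z + J *v u = (- (1/c)) *\<^sub>R ((?T - J) *v u) + (1 - 1/c) *\<^sub>R (J *v u)"
    using c by (simp add: matrix_vector_mult_diff_rdistrib scaleR_matrix_vector_assoc[symmetric] Gu
        algebra_simps)
  then have "sqrt (dual_form ?G1 (z + J *v u))
      \<le> sqrt (dual_form ?G1 ((- (1/c)) *\<^sub>R ((?T - J) *v u))) + sqrt (dual_form ?G1 ((1 - 1/c) *\<^sub>R (J *v u)))"
    by (simp only: dual_form_sqrt_triangle[OF G1])
  also have "\<dots> = (1/c) * sqrt (dual_form ?G1 ((?T - J) *v u)) + (1 - 1/c) * sqrt (dual_form ?G1 (J *v u))"
    using c by (simp add: real_sqrt_mult)
  also have "\<dots> \<le> sqrt (quad_form ?T u) * sr1_angle J ?T u + (1 - 1/c) * sqrt (quad_form ?T u)"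
  proof (intro add_mono mult_left_mono)
    have "(1/c) * sqrt (dual_form ?G1 ((?T - J) *v u)) \<le> sqrt (dual_form ?G1 ((?T - J) *v u))"
      using c dual_form_nonneg[OF G1, of "(?T - J) *v u"]
      by (simp add: divide_le_eq mult_le_cancel_left1)
    then show "(1/c) * sqrt (dual_form ?G1 ((?T - J) *v u)) \<le> sqrt (quad_form ?T u) * sr1_angle J ?T u"
      using dual_form_SR1_residual[OF J T JT, of u] by linarith
    have "dual_form ?G1 (J *v u) = quad_form ?G1 u"
      using dual_form_mult_vec[OF G1, of u] by (simp add: SR1_mult_vec[OF J T JT])
    then show "sqrt (dual_form ?G1 (J *v u)) \<le> sqrt (quad_form ?T u)"
      using SR1_le[OF J T JT, of u u] by simp
  qed (use c in simp)
  finally show ?thesis by (simp add: Tu algebra_simps)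
qed

lemma linear_rate_factor_le:
  fixes K \<rho> \<rho>' P :: real
  assumes K: "1 \<le> K" and r: "0 \<le> \<rho>" "\<rho> \<le> 9/(128*K)" and r': "0 \<le> \<rho>'" "\<rho>' \<le> 9/(128*K)"
    and P: "1 \<le> P" "P \<le> 32/23"
  shows "(1 + \<rho>) * (max \<rho>' (1 - 1/(K*P)) + \<rho> * (1 + \<rho>')) \<le> 1 - 1/(2*K)"
proof -
  define x where "x = 1/K"
  have x0: "0 < x" and x1: "x \<le> 1" using K by (auto simp: x_def)
  have rx: "\<rho> \<le> 9/128 * x" and rx': "\<rho>' \<le> 9/128 * x" using r r' by (auto simp: x_def)
  have KP: "23/32 * x \<le> 1/(K*P)"
  proof -
    have "K * P \<le> K * (32/23)" using P K by (intro mult_left_mono) auto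
    then have "1/(K * (32/23)) \<le> 1/(K*P)" using K P by (intro divide_left_mono) auto
    then show ?thesis by (simp add: x_def)
  qed
  define C :: real where "C = 10543/16384" \<comment> \<open>\<open>= 23/32 - 9/128 * (1 + 9/128)\<close>\<close>
  have m: "max \<rho>' (1 - 1/(K*P)) \<le> 1 - 23/32 * x" using rx' KP x1 by auto
  have rr: "\<rho> * (1 + \<rho>') \<le> (9/128 * x) * (1 + 9/128)"
    by (rule mult_mono) (use rx rx' x1 r r' in auto)
  have inner: "max \<rho>' (1 - 1/(K*P)) + \<rho> * (1 + \<rho>') \<le> 1 - C * x"
    using m rr by (simp add: C_def algebra_simps)
  have Cx: "0 \<le> 1 - C * x" using x1 x0 by (simp add: C_def)
  have "(1 + \<rho>) * (max \<rho>' (1 - 1/(K*P)) + \<rho> * (1 + \<rho>')) \<le> (1 + \<rho>) * (1 - C * x)"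
    by (rule mult_left_mono[OF inner]) (use r in simp)
  also have "\<dots> \<le> (1 + 9/128 * x) * (1 - C * x)"
    by (rule mult_right_mono[OF _ Cx]) (use rx in simp)
  also have "\<dots> \<le> 1 - x / 2"
  proof -
    define a :: real where "a = 9/128"
    have "(1 + a * x) * (1 - C * x) = 1 - (C - a) * x - (a * C) * (x * x)" by (simp add: algebra_simps)
    moreover have "0 \<le> (a * C) * (x * x)" by (simp add: a_def C_def)
    moreover have "(C - a) * x \<ge> x / 2" using x0 by (simp add: a_def C_def)
    ultimately show ?thesis by (simp add: a_def)
  qed
  finally show ?thesis by (simp add: x_def)
qed

lemma exp_9_32_le: "exp (9/32 :: real) \<le> 32/23"
proof -
  have "1 + (- 9/32) \<le> exp (- 9/32 :: real)" by (rule exp_ge_add_one_self)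
  then have "23/32 \<le> exp (- 9/32 :: real)" by simp
  then have "1 / exp (- 9/32 :: real) \<le> 1 / (23/32)" by (intro divide_left_mono) auto
  then show ?thesis by (simp add: exp_minus field_simps)
qed

lemma prod_one_plus_le_exp_sum:
  fixes a :: "nat \<Rightarrow> real"
  assumes "\<And>i. i \<in> S \<Longrightarrow> 0 \<le> a i"
  shows "(\<Prod>i\<in>S. 1 + a i) \<le> exp (\<Sum>i\<in>S. a i)"
proof (cases "finite S")
  case True
  have "(\<Prod>i\<in>S. 1 + a i) \<le> (\<Prod>i\<in>S. exp (a i))"
    by (rule prod_mono) (use assms in auto)
  also have "\<dots> = exp (\<Sum>i\<in>S. a i)" by (simp add: exp_sum True)
  finally show ?thesis .
next
  case False then show ?thesis by simp
qed

lemma root_prod_plus_one_le: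
  fixes y :: "nat \<Rightarrow> real"
  assumes k: "1 \<le> k" and y: "\<And>i. 0 \<le> y i"
  shows "(\<Prod>i<k. y i) powr (1 / k) + 1 \<le> (\<Prod>i<k. 1 + y i) powr (1 / k)"
proof -
  define Pr Y where "Pr = (\<Prod>i<k. 1 + y i)" and "Y = (\<Prod>i<k. y i)"
  have Pr: "Pr > 0" unfolding Pr_def by (rule prod_pos) (use y in \<open>auto simp: add_pos_nonneg\<close>)
  have "0 \<in> {..<k}" using k by simp
  then have S: "finite {..<k}" "{..<k} \<noteq> {}" "card {..<k} = k" by auto
  \<comment> \<open>AM-GM for the weights \<open>y i / (1 + y i)\<close> and \<open>1 / (1 + y i)\<close>, which add up to 1\<close>
  have "(Y / Pr) powr (1 / k) \<le> (\<Sum>i<k. y i / (1 + y i) / k)"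
    using arith_geom_mean[OF S(1,2), of "\<lambda>i. y i / (1 + y i)"] y
    by (simp add: S(3) Y_def Pr_def prod_dividef)
  moreover have "(1 / Pr) powr (1 / k) \<le> (\<Sum>i<k. 1 / (1 + y i) / k)"
    using arith_geom_mean[OF S(1,2), of "\<lambda>i. 1 / (1 + y i)"] y
    by (simp add: S(3) Pr_def prod_dividef)
  moreover have "(\<Sum>i<k. y i / (1 + y i) / k) + (\<Sum>i<k. 1 / (1 + y i) / k) = 1"
  proof -
    have "y i / (1 + y i) / k + 1 / (1 + y i) / k = 1 / k" for i
    proof -
      have "1 + y i \<noteq> 0" using y[of i] by linarith
      then have "y i / (1 + y i) + 1 / (1 + y i) = 1" by (simp add: add_divide_distrib[symmetric])
      then show ?thesis by (metis add_divide_distrib)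
    qed
    then show ?thesis using k by (simp add: sum.distrib[symmetric])
  qed
  ultimately have "Y powr (1 / k) / Pr powr (1 / k) + 1 / Pr powr (1 / k) \<le> 1"
    using Pr y by (simp add: powr_divide Y_def prod_nonneg)
  moreover have "0 < Pr powr (1 / k)" using Pr by simp
  ultimately have "Y powr (1 / k) + 1 \<le> Pr powr (1 / k)" by (simp add: field_simps)
  then show ?thesis by (simp add: Y_def Pr_def)
qed

lemma prod_le_exp_root_minus_one:
  fixes y :: "nat \<Rightarrow> real"
  assumes k: "1 \<le> k" and y: "\<And>i. 0 \<le> y i" and A: "(\<Prod>i<k. 1 + y i) \<le> exp A"
  shows "(\<Prod>i<k. y i) \<le> (exp (A / k) - 1) ^ k"
proof -
  define Pr Y where "Pr = (\<Prod>i<k. 1 + y i)" and "Y = (\<Prod>i<k. y i)"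
  have Y: "0 \<le> Y" unfolding Y_def by (rule prod_nonneg) (use y in auto)
  have Pr: "1 \<le> Pr" unfolding Pr_def by (rule prod_ge_1) (use y in simp)
  have "ln Pr \<le> A" using ln_le_cancel_iff[of Pr "exp A"] Pr A by (simp add: Pr_def)
  then have "Pr powr (1 / k) \<le> exp (A / k)" using Pr k by (simp add: powr_def divide_right_mono)
  then have root: "Y powr (1 / k) \<le> exp (A / k) - 1"
    using root_prod_plus_one_le[of k y, OF k y] by (simp add: Y_def Pr_def)
  have "Y = (Y powr (1 / k)) ^ k"
    using Y k by (cases "Y = 0") (simp_all add: powr_realpow[symmetric] powr_powr)
  also have "\<dots> \<le> (exp (A / k) - 1) ^ k" by (rule power_mono[OF root]) simp
  finally show ?thesis by (simp add: Y_def)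
qed

lemma one_plus_sq_le:
  fixes t c :: real
  assumes t: "0 \<le> t" and c: "1 \<le> c"
  shows "1 + (t + (1 - 1/c))^2 \<le> (1 + t^2) * c^2"
proof -
  define e where "e = 1 - 1/c"
  have e: "0 \<le> e" "e < 1" using c by (auto simp: e_def)
  have "(1 + t^2) * (1 + 2 * e) - (1 + (t + e)^2) = e * (t^2 + (t - 1)^2 + (1 - e))"
    by (simp add: power2_eq_square algebra_simps)
  moreover have "0 \<le> e * (t^2 + (t - 1)^2 + (1 - e))" using e by simp
  ultimately have "1 + (t + e)^2 \<le> (1 + t^2) * (1 + 2 * e)" by simp
  also have "1 + 2 * e \<le> c^2"
  proof -
    have "c * (c^2 - (1 + 2 * e)) = (c - 1)^2 * (c + 2)"
      using c by (simp add: e_def power2_eq_square field_simps)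
    moreover have "0 \<le> (c - 1)^2 * (c + 2)" using c by simp
    ultimately have "0 \<le> c * (c^2 - (1 + 2 * e))" by simp
    then show ?thesis using c by (simp add: zero_le_mult_iff)
  qed
  then have "(1 + t^2) * (1 + 2 * e) \<le> (1 + t^2) * c^2" by (rule mult_left_mono) simp
  finally show ?thesis by (simp add: e_def)
qed

lemma le_powr_half_of_sq_le:
  fixes a b X :: real
  assumes "a^2 \<le> (b * sqrt (X ^ k))^2" "0 \<le> b" "0 < X"
  shows "a \<le> X powr (real k / 2) * b"
proof -
  have "sqrt (X ^ k) = X powr (real k / 2)"
    using assms(3) by (simp add: powr_realpow[symmetric] powr_half_sqrt[symmetric] powr_powr)
  then show ?thesis
    using power2_le_imp_le[OF assms(1)] assms(2,3) abs_le_square_iff[of a] by (simp add: mult.commute)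
qed

section \<open>Convergence of the SR1 method with correction\<close>

locale sr1_correction = strongly_self_concordant_function f g H \<mu> L M
  for f :: "real^'n \<Rightarrow> real" and g H \<mu> L M +
  fixes x :: "nat \<Rightarrow> real^'n"
    and G :: "nat \<Rightarrow> real^'n^'n"
    and r :: "nat \<Rightarrow> real"
  assumes G0: "G 0 = L *\<^sub>R mat 1"
    and x_step: "\<And>k. x (Suc k) = x k - matrix_inv (G k) *v g (x k)"
    and r_def: "\<And>k. r k = local_norm H (x k) (x (Suc k) - x k)"
    and G_step: "\<And>k. G (Suc k) =
        SR1 (integral {0..1} (\<lambda>t. H (x k + t *\<^sub>R (x (Suc k) - x k))))
            (((1 + M * (if k = 0 then 0 else r (k - 1)) / 2) * (1 + M * r k / 2)) *\<^sub>R G k)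
            (x (Suc k) - x k)"
begin

text \<open>\<open>lam k\<close> is \<open>\<lambda>\<^sub>f(x\<^sub>k)\<close>, \<open>\<tau> k\<close> is its square measured with \<open>G k\<close> in place of the
  Hessian, \<open>\<rho>_prev k\<close> is \<open>M r\<^sub>k\<^sub>-\<^sub>1 / 2\<close> with \<open>r\<^sub>-\<^sub>1 = 0\<close>, and \<open>corr k\<close> is the
  correction factor applied to \<open>G k\<close> before the SR1 update.\<close>
definition u :: "nat \<Rightarrow> real^'n" where "u k = x (Suc k) - x k"
definition J :: "nat \<Rightarrow> real^'n^'n" where "J k = mean_hessian H (x k) (u k)"
definition \<rho> :: "nat \<Rightarrow> real" where "\<rho> k = M * r k / 2"
definition \<rho>_prev :: "nat \<Rightarrow> real" where "\<rho>_prev k = (if k = 0 then 0 else \<rho> (k - 1))"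
definition corr :: "nat \<Rightarrow> real" where "corr k = (1 + \<rho>_prev k) * (1 + \<rho> k)"
definition P :: "nat \<Rightarrow> real" where "P k = (\<Prod>i<k. corr i)"
definition lam :: "nat \<Rightarrow> real" where "lam k = sqrt (dual_form (H (x k)) (g (x k)))"
definition \<tau> :: "nat \<Rightarrow> real" where "\<tau> k = dual_form (G k) (g (x k))"
definition \<theta> :: "nat \<Rightarrow> real" where "\<theta> k = sr1_angle (J k) (corr k *\<^sub>R G k) (u k)"
definition y :: "nat \<Rightarrow> real" where "y k = (\<theta> k + (1 - 1 / corr k))^2"

lemma newton_decr_eq: "newton_decr g H (x k) = lam k"
  by (simp add: newton_decr_def lam_def dual_form_def)

lemma u_eq: "u k = - (matrix_inv (G k) *v g (x k))"
  using x_step[of k] by (simp add: u_def)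

lemma G_Suc: "G (Suc k) = SR1 (J k) (corr k *\<^sub>R G k) (u k)"
  using G_step[of k] by (simp add: J_def mean_hessian_def u_def corr_def \<rho>_prev_def \<rho>_def)

lemma g_Suc: "g (x (Suc k)) = g (x k) + J k *v u k"
  using gradient_increment[of "x k" "u k"] by (simp add: J_def u_def)

lemma rho_nonneg: "0 \<le> \<rho> k"
  using M_nonneg local_norm_nonneg by (simp add: \<rho>_def r_def)

lemma rho_prev_nonneg: "0 \<le> \<rho>_prev k"
  using rho_nonneg by (simp add: \<rho>_prev_def)

lemma corr_ge_1: "1 \<le> corr k"
  unfolding corr_def using rho_nonneg[of k] rho_prev_nonneg[of k]
  by (metis add_increasing2 mult_mono' mult_1_left zero_le_one order_refl)

lemma P_Suc: "P (Suc k) = P k * corr k"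
  by (simp add: P_def)

lemma P_ge_1: "1 \<le> P k"
  unfolding P_def by (rule prod_ge_1) (use corr_ge_1 in auto)

lemma J_le: "quad_form (J k) v \<le> (1 + \<rho> k) * quad_form (H (x k)) v"
  using mean_hessian_le by (simp add: J_def \<rho>_def r_def u_def)

lemma J_ge: "quad_form (H (x k)) v - quad_form (J k) v \<le> \<rho> k * quad_form (H (x k)) v"
  using mean_hessian_ge by (simp add: J_def \<rho>_def r_def u_def)

lemma H_Suc_le_J: "quad_form (H (x (Suc k))) v \<le> (1 + \<rho> k) * quad_form (J k) v"
  using hessian_endpoint_le_mean_hessian[of "x k" "u k"] by (simp add: J_def \<rho>_def r_def u_def)

lemma H_le_H_Suc: "quad_form (H (x k)) v \<le> (1 + 2 * \<rho> k) * quad_form (H (x (Suc k))) v"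
  using hessian_variation[of "x k" v "x (Suc k)" "x k" "x (Suc k)"]
  by (simp add: \<rho>_def r_def local_norm_minus_commute algebra_simps)

lemma symmetric_J: "symmetric_matrix (J k)"
  by (simp add: J_def symmetric_mean_hessian)

lemma pos_def_J: "pos_def_ge (\<mu> / (1 + \<rho> k)) (J k)"
  by (rule pos_def_ge_of_le[OF pos_def_hessian symmetric_J H_Suc_le_J]) (use rho_nonneg[of k] in simp)

lemma J_le_scaled_G:
  assumes HG: "\<And>v. quad_form (H (x k)) v \<le> (1 + \<rho>_prev k) * quad_form (G k) v"
  shows "quad_form (J k) v \<le> quad_form (corr k *\<^sub>R G k) v"
proof -
  have "quad_form (J k) v \<le> (1 + \<rho> k) * quad_form (H (x k)) v" by (rule J_le)
  also have "\<dots> \<le> (1 + \<rho> k) * ((1 + \<rho>_prev k) * quad_form (G k) v)"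
    using mult_left_mono[OF HG[of v], of "1 + \<rho> k"] rho_nonneg[of k] by simp
  finally show ?thesis by (simp add: corr_def mult_ac)
qed

lemma G_invariant:
  "symmetric_matrix (G k) \<and> (\<forall>v. quad_form (H (x k)) v \<le> (1 + \<rho>_prev k) * quad_form (G k) v)
    \<and> (\<forall>v. quad_form (G k) v \<le> L * P k * (v \<bullet> v))"
proof (induction k)
  case 0
  show ?case using hessian_le by (simp add: G0 \<rho>_prev_def P_def)
next
  case (Suc k)
  then have sG: "symmetric_matrix (G k)"
    and HG: "\<And>v. quad_form (H (x k)) v \<le> (1 + \<rho>_prev k) * quad_form (G k) v"
    and GL: "\<And>v. quad_form (G k) v \<le> L * P k * (v \<bullet> v)" by auto
  let ?G1 = "SR1 (J k) (corr k *\<^sub>R G k) (u k)"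
  note SR1 = symmetric_SR1 SR1_ge SR1_le
  note SR1 = SR1[OF pos_def_J symmetric_matrix_scaleR[OF sG] J_le_scaled_G[OF HG], where u = "u k"]
  have "quad_form (H (x (Suc k))) v \<le> (1 + \<rho> k) * quad_form ?G1 v" for v
  proof -
    have "quad_form (H (x (Suc k))) v \<le> (1 + \<rho> k) * quad_form (J k) v" by (rule H_Suc_le_J)
    also have "\<dots> \<le> (1 + \<rho> k) * quad_form ?G1 v"
      by (rule mult_left_mono[OF SR1(2)]) (use rho_nonneg[of k] in simp)
    finally show ?thesis .
  qed
  moreover have "quad_form ?G1 v \<le> L * P (Suc k) * (v \<bullet> v)" for v
  proof -
    have "quad_form ?G1 v \<le> corr k * quad_form (G k) v" using SR1(3)[of v] by simp
    also have "\<dots> \<le> corr k * (L * P k * (v \<bullet> v))"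
      by (rule mult_left_mono[OF GL]) (use corr_ge_1[of k] in simp)
    finally show ?thesis by (simp add: P_Suc mult_ac)
  qed
  ultimately show ?case using SR1(1) by (simp add: G_Suc \<rho>_prev_def)
qed

lemma symmetric_G: "symmetric_matrix (G k)"
  using G_invariant by blast

lemma H_le_G: "quad_form (H (x k)) v \<le> (1 + \<rho>_prev k) * quad_form (G k) v"
  using G_invariant by blast

lemma G_le: "quad_form (G k) v \<le> L * P k * (v \<bullet> v)"
  using G_invariant by blast

lemma pos_def_G: "pos_def_ge (\<mu> / (1 + \<rho>_prev k)) (G k)"
  by (rule pos_def_ge_of_le[OF pos_def_hessian symmetric_G H_le_G]) (use rho_prev_nonneg[of k] in simp)

lemma J_le_corr_G: "quad_form (J k) v \<le> corr k * quad_form (G k) v"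
  using J_le_scaled_G[OF H_le_G] by simp

lemma G_le_H: "quad_form (G k) v \<le> (L / \<mu> * P k) * quad_form (H (x k)) v"
proof -
  have "quad_form (G k) v \<le> (L / \<mu> * P k) * (\<mu> * (v \<bullet> v))"
    using G_le[of k v] mu_pos by simp
  also have "\<dots> \<le> (L / \<mu> * P k) * quad_form (H (x k)) v"
    by (rule mult_left_mono[OF hessian_ge]) (use L_pos mu_pos P_ge_1[of k] in simp)
  finally show ?thesis .
qed

lemma kappa_P_ge_1: "1 \<le> L / \<mu> * P k"
  using condition_number_ge_1 P_ge_1[of k] by (metis mult_mono' mult_1_left zero_le_one order_trans)

lemma lam_nonneg: "0 \<le> lam k"
  unfolding lam_def using dual_form_nonneg[OF pos_def_hessian] by simp

lemma step_length_le: "r k \<le> (1 + \<rho>_prev k) * lam k"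
  using step_length_bound[OF pos_def_hessian symmetric_G rho_prev_nonneg H_le_G, of k "g (x k)"]
  by (simp add: r_def u_eq[unfolded u_def] local_norm_eq lam_def)

lemma lam_Suc_le:
  "lam (Suc k) \<le> (1 + \<rho> k) * (max (\<rho>_prev k) (1 - 1 / (L / \<mu> * P k)) + \<rho> k * (1 + \<rho>_prev k)) * lam k"
proof -
  have "g (x (Suc k)) = g (x k) - J k *v (matrix_inv (G k) *v g (x k))"
    using g_Suc[of k] u_eq[of k] by (simp add: vec.neg)
  then show ?thesis
    using newton_step_bound[OF pos_def_hessian pos_def_hessian symmetric_J symmetric_G rho_nonneg
        rho_prev_nonneg kappa_P_ge_1 H_le_G G_le_H J_le J_ge H_le_H_Suc, of k "g (x k)"]
    by (simp add: lam_def)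
qed

lemma sum_rho_prev_le: "(\<Sum>i<k. \<rho>_prev i) \<le> (\<Sum>i<k. \<rho> i)"
proof (cases k)
  case (Suc j)
  have "(\<Sum>i<Suc j. \<rho>_prev i) = (\<Sum>i<j. \<rho> i)"
    by (induction j) (simp_all add: \<rho>_prev_def)
  also have "\<dots> \<le> (\<Sum>i<Suc j. \<rho> i)" using rho_nonneg[of j] by simp
  finally show ?thesis using Suc by simp
qed simp

lemma P_le_exp: "P k \<le> exp (2 * (\<Sum>i<k. \<rho> i))"
proof -
  have prev: "(\<Prod>i<k. 1 + \<rho>_prev i) \<le> exp (\<Sum>i<k. \<rho>_prev i)"
    by (rule prod_one_plus_le_exp_sum) (rule rho_prev_nonneg)
  have cur: "(\<Prod>i<k. 1 + \<rho> i) \<le> exp (\<Sum>i<k. \<rho> i)"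
    by (rule prod_one_plus_le_exp_sum) (rule rho_nonneg)
  have "0 \<le> (\<Prod>i<k. 1 + \<rho> i)"
    by (rule prod_nonneg) (use rho_nonneg in \<open>simp add: add_nonneg_nonneg\<close>)
  then have "P k \<le> exp (\<Sum>i<k. \<rho>_prev i) * exp (\<Sum>i<k. \<rho> i)"
    unfolding P_def corr_def prod.distrib using mult_mono[OF prev cur] by simp
  also have "\<dots> \<le> exp (\<Sum>i<k. \<rho> i) * exp (\<Sum>i<k. \<rho> i)"
    by (rule mult_right_mono) (simp_all add: sum_rho_prev_le)
  also have "\<dots> = exp (2 * (\<Sum>i<k. \<rho> i))" by (simp only: mult_2 exp_add)
  finally show ?thesis .
qed

lemma P_le_of_sum_rho_le:
  assumes "(\<Sum>i<k. \<rho> i) \<le> 9/64" shows "P k \<le> 32/23"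
proof -
  have "exp (2 * (\<Sum>i<k. \<rho> i)) \<le> exp (9/32)" using assms by simp
  then show ?thesis using P_le_exp[of k] exp_9_32_le by linarith
qed

lemma sum_rho_le:
  assumes init: "M * lam 0 \<le> 1 / (8 * (L / \<mu>))"
    and lam: "\<And>i. i < k \<Longrightarrow> lam i \<le> (1 - 1 / (2 * (L / \<mu>)))^i * lam 0"
    and rho: "\<And>i. i < k \<Longrightarrow> \<rho> i \<le> 9/16 * M * lam i"
  shows "(\<Sum>i<k. \<rho> i) \<le> 9/64"
proof -
  define q where "q = 1 - 1 / (2 * (L / \<mu>))"
  have q: "0 \<le> q" "q < 1" using mu_pos mu_le_L by (auto simp: q_def field_simps)
  have "(\<Sum>i<k. \<rho> i) \<le> (\<Sum>i<k. q^i * (9/16 * (M * lam 0)))"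
  proof (rule sum_mono)
    fix i assume "i \<in> {..<k}"
    then have "\<rho> i \<le> 9/16 * (M * lam i)" and "M * lam i \<le> M * (q^i * lam 0)"
      using rho[of i] mult_left_mono[OF lam[of i] M_nonneg] by (simp_all add: q_def)
    then show "\<rho> i \<le> q^i * (9/16 * (M * lam 0))" by (simp add: mult_ac)
  qed
  also have "\<dots> = (\<Sum>i<k. q^i) * (9/16 * (M * lam 0))" by (rule sum_distrib_right[symmetric])
  also have "\<dots> = 9/16 * (M * lam 0) * ((1 - q^k) / (1 - q))"
    using q by (simp add: sum_gp_strict mult.commute)
  also have "\<dots> \<le> 9/16 * (1 / (8 * (L / \<mu>))) * (1 / (1 - q))"
  proof (intro mult_mono divide_right_mono)
    show "1 - q^k \<le> 1" using q by simp
  qed (use q init M_nonneg lam_nonneg[of 0] mu_pos L_pos in \<open>simp_all add: power_le_one\<close>)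
  also have "\<dots> = 9/64" using mu_pos L_pos by (simp add: q_def field_simps)
  finally show ?thesis .
qed

lemma rho_le_of_rho_prev_le:
  assumes "\<rho>_prev k \<le> 1/8" shows "\<rho> k \<le> 9/16 * M * lam k"
proof -
  have "r k \<le> 9/8 * lam k"
    using step_length_le[of k] mult_right_mono[of "1 + \<rho>_prev k" "9/8" "lam k"] assms lam_nonneg[of k]
    by linarith
  have "M * r k \<le> M * (9/8 * lam k)" by (rule mult_left_mono[OF \<open>r k \<le> _\<close> M_nonneg])
  then show ?thesis by (simp add: \<rho>_def)
qed

text \<open>While \<open>M lam i \<le> 1 / (8 \<kappa>)\<close>, the corrections stay below \<open>9 / (128 \<kappa>)\<close> and
  \<open>P k \<le> 32/23\<close>, which keeps the contraction factor in \<open>lam_Suc_le\<close> below \<open>1 - 1 / (2 \<kappa>)\<close>.\<close>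
lemma linear_phase:
  assumes init: "M * lam 0 \<le> 1 / (8 * (L / \<mu>))"
  shows "(\<forall>i\<le>k. lam i \<le> (1 - 1 / (2 * (L / \<mu>)))^i * lam 0) \<and> (\<forall>i<k. \<rho> i \<le> 9/16 * M * lam i)"
proof (induction k)
  case (Suc k)
  define K where "K = L / \<mu>"
  define q where "q = 1 - 1 / (2 * K)"
  have K: "1 \<le> K" using condition_number_ge_1 by (simp add: K_def)
  have q: "0 \<le> q" "q \<le> 1" using K by (auto simp: q_def)
  have lam: "\<And>i. i \<le> k \<Longrightarrow> lam i \<le> q^i * lam 0" and rho: "\<And>i. i < k \<Longrightarrow> \<rho> i \<le> 9/16 * M * lam i"
    using Suc.IH by (simp_all add: q_def K_def)
  have M_lam: "M * lam i \<le> 1 / (8 * K)" if "i \<le> k" for i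
  proof -
    have "lam i \<le> lam 0"
      using order_trans[OF lam[OF that] mult_right_mono[OF power_le_one[OF q] lam_nonneg[of 0]]] by simp
    then have "M * lam i \<le> M * lam 0" by (rule mult_left_mono[OF _ M_nonneg])
    then show ?thesis using init by (simp add: K_def)
  qed
  have small: "9/16 * M * lam i \<le> 9 / (128 * K)" if "i \<le> k" for i
    using M_lam[OF that] by simp
  have rho_prev: "\<rho>_prev k \<le> 9 / (128 * K)"
    using rho[of "k - 1"] small[of "k - 1"] K by (cases k) (auto simp: \<rho>_prev_def)
  moreover have "9 / (128 * K) \<le> 1/8" using K by (simp add: field_simps)
  ultimately have "\<rho>_prev k \<le> 1/8" by linarith
  then have rho_k: "\<rho> k \<le> 9/16 * M * lam k" by (rule rho_le_of_rho_prev_le)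
  have "(\<Sum>i<k. \<rho> i) \<le> 9/64"
    by (rule sum_rho_le[OF init]) (use lam rho in \<open>simp_all add: q_def K_def\<close>)
  then have "(1 + \<rho> k) * (max (\<rho>_prev k) (1 - 1 / (K * P k)) + \<rho> k * (1 + \<rho>_prev k)) \<le> q"
    unfolding q_def using rho_k small[of k] rho_prev
    by (intro linear_rate_factor_le[OF K rho_nonneg _ rho_prev_nonneg _ P_ge_1 P_le_of_sum_rho_le]) auto
  from mult_right_mono[OF this lam_nonneg[of k]] have "lam (Suc k) \<le> q * lam k"
    using lam_Suc_le[of k] by (simp add: K_def)
  also have "\<dots> \<le> q^(Suc k) * lam 0" using mult_left_mono[OF lam[of k] q(1)] by simp
  finally have "lam (Suc k) \<le> q^(Suc k) * lam 0" .
  then show ?case using lam rho rho_k by (auto simp: q_def K_def le_Suc_eq less_Suc_eq)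
qed simp

lemma tau_nonneg: "0 \<le> \<tau> k"
  unfolding \<tau>_def by (rule dual_form_nonneg[OF pos_def_G])

lemma theta_nonneg: "0 \<le> \<theta> k"
  unfolding \<theta>_def
  by (rule sr1_angle_nonneg[OF pos_def_J symmetric_matrix_scaleR[OF symmetric_G] J_le_scaled_G[OF H_le_G]])

lemma tau_Suc_le: "\<tau> (Suc k) \<le> corr k * \<tau> k * y k"
proof -
  have "sqrt (\<tau> (Suc k)) \<le> sqrt (corr k * \<tau> k) * (\<theta> k + (1 - 1 / corr k))"
    using SR1_step_bound[OF pos_def_J[of k] pos_def_G[of k] corr_ge_1[of k] J_le_corr_G[of k],
        where z = "g (x k)"]
    by (simp add: \<tau>_def \<theta>_def G_Suc g_Suc u_eq)
  from power_mono[OF this, of 2] show ?thesis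
    using tau_nonneg[of k] tau_nonneg[of "Suc k"] corr_ge_1[of k]
    by (simp add: power_mult_distrib y_def)
qed

lemma tau_le_prod: "\<tau> k \<le> \<tau> 0 * P k * (\<Prod>i<k. y i)"
proof (induction k)
  case (Suc k)
  have "\<tau> (Suc k) \<le> corr k * \<tau> k * y k" by (rule tau_Suc_le)
  also have "\<dots> \<le> corr k * (\<tau> 0 * P k * (\<Prod>i<k. y i)) * y k"
    using Suc.IH corr_ge_1[of k] by (intro mult_right_mono mult_left_mono) (auto simp: y_def)
  finally show ?case by (simp add: P_Suc mult_ac)
qed (simp add: P_def)

lemma det_G_prod: "det (G k) * (\<Prod>i<k. 1 + (\<theta> i)^2) = (P k * L) ^ CARD('n)"
proof (induction k)
  case (Suc k)
  have SR1_det: "det (G (Suc k)) * (1 + (\<theta> k)^2) = det (corr k *\<^sub>R G k)"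
    unfolding G_Suc \<theta>_def
    by (rule det_SR1[OF pos_def_J symmetric_matrix_scaleR[OF symmetric_G] J_le_scaled_G[OF H_le_G]])
  have "det (G (Suc k)) * (\<Prod>i<Suc k. 1 + (\<theta> i)^2)
      = (det (G (Suc k)) * (1 + (\<theta> k)^2)) * (\<Prod>i<k. 1 + (\<theta> i)^2)" by (simp add: mult_ac)
  also have "\<dots> = (corr k) ^ CARD('n) * (det (G k) * (\<Prod>i<k. 1 + (\<theta> i)^2))"
    by (simp add: SR1_det det_scaleR mult_ac)
  also have "\<dots> = (P (Suc k) * L) ^ CARD('n)" by (simp add: Suc.IH P_Suc power_mult_distrib mult_ac)
  finally show ?case .
qed (simp add: G0 det_scaleR P_def)

lemma prod_one_plus_theta_sq_le:
  "(\<Prod>i<k. 1 + (\<theta> i)^2) \<le> (P k * (L / \<mu>) * (1 + \<rho>_prev k)) ^ CARD('n)"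
proof -
  define m where "m = \<mu> / (1 + \<rho>_prev k)"
  have m: "0 < m" using mu_pos rho_prev_nonneg[of k] by (simp add: m_def)
  have det: "m ^ CARD('n) \<le> det (G k)" unfolding m_def by (rule pos_def_ge_det[OF pos_def_G])
  then have dpos: "0 < det (G k)" using m by (metis zero_less_power order_less_le_trans)
  then have "(\<Prod>i<k. 1 + (\<theta> i)^2) = (P k * L) ^ CARD('n) / det (G k)"
    using det_G_prod[of k] by (simp add: field_simps)
  also have "\<dots> \<le> (P k * L) ^ CARD('n) / m ^ CARD('n)"
    using det m L_pos P_ge_1[of k] dpos by (intro divide_left_mono) auto
  also have "\<dots> = (P k * L / m) ^ CARD('n)" by (rule power_divide[symmetric])
  also have "P k * L / m = P k * (L / \<mu>) * (1 + \<rho>_prev k)"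
    using mu_pos rho_prev_nonneg[of k] by (simp add: m_def field_simps)
  finally show ?thesis .
qed

lemma prod_one_plus_y_le:
  "(\<Prod>i<k. 1 + y i) \<le> (P k * (L / \<mu>) * (1 + \<rho>_prev k)) ^ CARD('n) * (P k)^2"
proof -
  have "(\<Prod>i<k. 1 + y i) \<le> (\<Prod>i<k. (1 + (\<theta> i)^2) * (corr i)^2)"
    by (intro prod_mono conjI) (simp_all add: y_def one_plus_sq_le theta_nonneg corr_ge_1)
  also have "\<dots> = (\<Prod>i<k. 1 + (\<theta> i)^2) * (P k)^2"
    by (simp add: prod.distrib P_def prod_power_distrib)
  also have "\<dots> \<le> (P k * (L / \<mu>) * (1 + \<rho>_prev k)) ^ CARD('n) * (P k)^2"
    by (rule mult_right_mono[OF prod_one_plus_theta_sq_le]) simp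
  finally show ?thesis .
qed

lemma tau0_le: "\<tau> 0 \<le> (lam 0)^2"
proof -
  have "pos_def_ge L (G 0)" using L_pos by (simp add: G0 pos_def_ge_def)
  then have "dual_form (G 0) (g (x 0)) \<le> dual_form (H (x 0)) (g (x 0))"
    by (rule dual_form_antimono[OF pos_def_hessian]) (simp add: G0 hessian_le)
  then show ?thesis using dual_form_nonneg[OF pos_def_hessian] by (simp add: \<tau>_def lam_def)
qed

lemma lam_sq_le_tau: "(lam k)^2 \<le> (L / \<mu> * P k) * \<tau> k"
proof -
  have "dual_form (H (x k)) (g (x k)) \<le> (L / \<mu> * P k) * dual_form (G k) (g (x k))"
    by (rule dual_form_le_scaled[OF pos_def_G pos_def_hessian _ G_le_H]) (use kappa_P_ge_1[of k] in simp)
  then show ?thesis using dual_form_nonneg[OF pos_def_hessian] by (simp add: \<tau>_def lam_def)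
qed

lemma initial_condition:
  assumes "M * lam 0 \<le> ln (3 / 2) / (4 * (L / \<mu>))"
  shows "M * lam 0 \<le> 1 / (8 * (L / \<mu>))"
proof -
  have "ln (3/2 :: real) / (4 * (L / \<mu>)) \<le> (1/2) / (4 * (L / \<mu>))"
    using ln_le_minus_one[of "3/2"] condition_number_ge_1 by (intro divide_right_mono) auto
  then show ?thesis using assms by simp
qed

context
  assumes init: "M * lam 0 \<le> 1 / (8 * (L / \<mu>))"
begin

lemma lam_le_geometric: "lam k \<le> (1 - 1 / (2 * (L / \<mu>)))^k * lam 0"
  using linear_phase[OF init, of k] by simp

lemma rho_le_lam: "\<rho> k \<le> 9/16 * M * lam k"
  using linear_phase[OF init, of "Suc k"] by simp

lemma M_lam_le: "M * lam k \<le> 1 / (8 * (L / \<mu>))"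
proof -
  have "0 \<le> 1 - 1 / (2 * (L / \<mu>))" "1 - 1 / (2 * (L / \<mu>)) \<le> 1"
    using mu_pos mu_le_L by (simp_all add: field_simps)
  then have "lam k \<le> lam 0"
    using order_trans[OF lam_le_geometric mult_right_mono[OF power_le_one lam_nonneg[of 0]]] by simp
  then have "M * lam k \<le> M * lam 0" by (rule mult_left_mono[OF _ M_nonneg])
  then show ?thesis using init by linarith
qed

lemma rho_prev_le: "\<rho>_prev k \<le> 9 / (128 * (L / \<mu>))"
  using rho_le_lam[of "k - 1"] M_lam_le[of "k - 1"] mu_pos L_pos by (simp add: \<rho>_prev_def)

lemma P_le: "P k \<le> 32/23"
  by (intro P_le_of_sum_rho_le sum_rho_le[OF init] lam_le_geometric rho_le_lam)

lemma prod_one_plus_y_le_exp: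
  shows "(\<Prod>i<k. 1 + y i) \<le> exp (2 * real CARD('n) * ln (exp 1 * (L / \<mu>)))"
proof -
  define E where "E = exp 1 * (L / \<mu>)"
  have e: "2 \<le> exp (1::real)" using exp_ge_add_one_self[of "1::real"] by simp
  have E1: "exp 1 \<le> E"
    unfolding E_def using mult_left_mono[OF condition_number_ge_1, of "exp 1"] by simp
  then have E: "exp 1 \<le> E" "1 \<le> E" using e by linarith+
  have P: "1 \<le> P k" "P k \<le> 32/23" using P_ge_1 P_le by auto
  have "P k * (1 + \<rho>_prev k) \<le> 32/23 * (1 + 9/128)"
  proof (rule mult_mono[OF P(2)])
    have "9 / (128 * (L / \<mu>)) \<le> 9/128" using mu_pos mu_le_L by (simp add: field_simps)
    then show "1 + \<rho>_prev k \<le> 1 + 9/128" using rho_prev_le[of k] by simp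
  qed (use rho_prev_nonneg[of k] in auto)
  moreover have "32/23 * (1 + 9/128) \<le> (2::real)" by simp
  ultimately have "P k * (1 + \<rho>_prev k) \<le> exp 1" using e by linarith
  from mult_left_mono[OF this, of "L / \<mu>"] have "P k * (L / \<mu>) * (1 + \<rho>_prev k) \<le> E"
    using condition_number_ge_1 by (simp add: E_def mult_ac)
  then have En: "(P k * (L / \<mu>) * (1 + \<rho>_prev k)) ^ CARD('n) \<le> E ^ CARD('n)"
    using P rho_prev_nonneg[of k] mu_pos L_pos by (intro power_mono) auto
  have "(P k)^2 \<le> (32/23)^2" using P by (intro power_mono) auto
  also have "\<dots> \<le> E" using e E by (simp add: power2_eq_square)
  also have "\<dots> \<le> E ^ CARD('n)" using E by (simp add: power_increasing[of 1, simplified])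
  finally have P2: "(P k)^2 \<le> E ^ CARD('n)" .
  have "(\<Prod>i<k. 1 + y i) \<le> (P k * (L / \<mu>) * (1 + \<rho>_prev k)) ^ CARD('n) * (P k)^2"
    by (rule prod_one_plus_y_le)
  also have "\<dots> \<le> E ^ CARD('n) * E ^ CARD('n)"
    using E by (intro mult_mono[OF En P2]) auto
  also have "\<dots> = E powr real (2 * CARD('n))"
    using E by (subst powr_realpow) (simp_all add: mult_2 power_add)
  also have "\<dots> = exp (2 * real CARD('n) * ln E)" using E by (simp add: powr_def)
  finally show ?thesis by (simp add: E_def)
qed

lemma lam_sq_le_prod_y:
  shows "(lam k)^2 \<le> 3 * (L / \<mu>) * (lam 0)^2 * (\<Prod>i<k. y i)"
proof -
  have Y: "0 \<le> (\<Prod>i<k. y i)" by (rule prod_nonneg) (simp add: y_def)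
  have "(P k)^2 \<le> (32/23)^2" by (rule power_mono[OF P_le]) (use P_ge_1[of k] in simp)
  then have "(P k)^2 \<le> 3" by (simp add: power2_eq_square)
  have "(lam k)^2 \<le> (L / \<mu> * P k) * \<tau> k" by (rule lam_sq_le_tau)
  also have "\<dots> \<le> (L / \<mu> * P k) * (\<tau> 0 * P k * (\<Prod>i<k. y i))"
    by (rule mult_left_mono[OF tau_le_prod]) (use kappa_P_ge_1[of k] in simp)
  also have "\<dots> = (L / \<mu>) * (P k)^2 * \<tau> 0 * (\<Prod>i<k. y i)" by (simp add: power2_eq_square mult_ac)
  also have "\<dots> \<le> (L / \<mu>) * 3 * (lam 0)^2 * (\<Prod>i<k. y i)"
    using \<open>(P k)^2 \<le> 3\<close> tau0_le tau_nonneg[of 0] Y mu_pos L_pos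
    by (intro mult_mono) auto
  finally show ?thesis by (simp add: mult_ac)
qed

lemma superlinear_rate:
  assumes k: "1 \<le> k"
  shows "lam k \<le> (exp (2 * real CARD('n) * ln (exp 1 * (L / \<mu>)) / k) - 1) powr (real k / 2)
    * sqrt (3 * (L / \<mu>)) * lam 0"
proof -
  let ?\<kappa> = "L / \<mu>" and ?A = "2 * real CARD('n) * ln (exp 1 * (L / \<mu>))"
  have "0 < ln (exp 1 * ?\<kappa>)"
    using condition_number_ge_1 ln_mult[of "exp 1" ?\<kappa>] mu_pos L_pos by (simp add: add_pos_nonneg)
  then have rate_pos: "0 < exp (?A / k) - 1" using k by simp
  have "(lam k)^2 \<le> 3 * ?\<kappa> * (lam 0)^2 * (\<Prod>i<k. y i)"
    by (rule lam_sq_le_prod_y)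
  also have "\<dots> \<le> 3 * ?\<kappa> * (lam 0)^2 * (exp (?A / k) - 1) ^ k"
    using prod_le_exp_root_minus_one[OF k _ prod_one_plus_y_le_exp] mu_pos L_pos
    by (intro mult_left_mono) (simp_all add: y_def)
  also have "\<dots> = (sqrt (3 * ?\<kappa>) * lam 0 * sqrt ((exp (?A / k) - 1) ^ k))^2"
    using condition_number_ge_1 rate_pos by (simp add: power_mult_distrib)
  finally have "lam k \<le> (exp (?A / k) - 1) powr (real k / 2) * (sqrt (3 * ?\<kappa>) * lam 0)"
    by (rule le_powr_half_of_sq_le) (use lam_nonneg[of 0] mu_pos L_pos rate_pos in simp_all)
  then show ?thesis by (simp add: mult_ac)
qed
end

end

theorem theorem4:
  fixes f :: "real^'n \<Rightarrow> real"
    and g :: "real^'n \<Rightarrow> real^'n"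
    and H :: "real^'n \<Rightarrow> real^'n^'n"
    and \<mu> L M :: real
    and x :: "nat \<Rightarrow> real^'n"
    and G :: "nat \<Rightarrow> real^'n^'n"
    and r :: "nat \<Rightarrow> real"
  assumes grad: "\<And>y. (f has_derivative (\<lambda>h. g y \<bullet> h)) (at y)"
    and hess: "\<And>y. (g has_derivative (\<lambda>h. H y *v h)) (at y)"
    and mu_pos: "0 < \<mu>" and mu_le_L: "\<mu> \<le> L"
    and bounds: "\<And>y. loewner_le (\<mu> *\<^sub>R mat 1) (H y) \<and> loewner_le (H y) (L *\<^sub>R mat 1)"
    and ssc: "strongly_self_concordant H M"
    and G0: "G 0 = L *\<^sub>R mat 1"
    and x_step: "\<And>k. x (Suc k) = x k - matrix_inv (G k) *v g (x k)"
    and r_def: "\<And>k. r k = local_norm H (x k) (x (Suc k) - x k)"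
    and G_step: "\<And>k. G (Suc k) =
        SR1 (integral {0..1} (\<lambda>t. H (x k + t *\<^sub>R (x (Suc k) - x k))))
            (((1 + M * (if k = 0 then 0 else r (k - 1)) / 2) * (1 + M * r k / 2)) *\<^sub>R G k)
            (x (Suc k) - x k)"
    and init: "M * newton_decr g H (x 0) \<le> ln (3 / 2) / (4 * (L / \<mu>))"
  shows "\<forall>k\<ge>1. newton_decr g H (x k) \<le>
     (exp (2 * real CARD('n) * ln (exp 1 * (L / \<mu>)) / real k) - 1) powr (real k / 2)
       * sqrt (3 * (L / \<mu>)) * newton_decr g H (x 0)"
proof -
  interpret sr1_correction f g H \<mu> L M x G r
    by unfold_locales (fact grad hess mu_pos mu_le_L bounds ssc G0 x_step r_def G_step)+
  show ?thesis
    using superlinear_rate[OF initial_condition[OF init[unfolded newton_decr_eq]]]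
    by (simp add: newton_decr_eq)
qed

end
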